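(* Assume the standing hypotheses (H) below, and assume there exists a positive stationary solution $\bar u\in L^1(\Omega)\cap L^\infty(\Omega)$, i.e. $\mathcal{M}[\bar u]+[a-\int_\Omega k\bar u]\bar u=0$ a.e. in $\Omega$. Let $u_0\in L^1(\Omega)\cap L^\infty(\Omega)$, $u_0\ge0$, $u_0\not\equiv0$, and let $u\in C^1((0,\infty);L^1(\Omega)\cap L^\infty(\Omega))$ be a non-negative solution of $$\partial_t u=\mathcal{M}[u]+\Big[a(x)-\int_\Omega k(y)u(t,y)\,dy\Big]u,\qquad u(0,\cdot)=u_0.$$ Then there exist constants $C_2>c_2>0$, depending on $u_0$, such that $c_2\le\|u(t,\cdot)\|_{L^2(\Omega)}<C_2$ for all $t>0$.
   Context: Standing hypotheses (H): $\Omega\subset\mathbb{R}^N$ is an open bounded connected set with Lipschitz boundary; $a$ continuous on $\bar\Omega$ and positive; $m\ge0$ symmetric, $m(x,\cdot)$ measurable for every $x$, $m(\cdot,y)$ uniformly continuous for a.e. $y$, with $\sup_x\int_\Omega m(x,y)dy<\infty$; $k=k(y)$ with $c_0\mathbf{1}_\Omega\le k\le C_0\mathbf{1}_\Omega$ for constants $C_0\ge c_0>0$. $\mathcal{M}[v](x):=\int_\Omega m(x,y)[v(y)-v(x)]dy$. *)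

theory Defs
  imports "HOL-Analysis.Analysis"
begin

text \<open>Lipschitz boundary: near every boundary point, after choosing a unit direction e,
  the domain is the (strict) supergraph in direction e of a Lipschitz function defined
  on the hyperplane orthogonal to e (gamma is evaluated on the orthogonal projection).\<close>
definition lipschitz_boundary :: "'a::euclidean_space set \<Rightarrow> bool" where
  "lipschitz_boundary \<Omega> \<longleftrightarrow>
     (\<forall>x0\<in>frontier \<Omega>. \<exists>r>0. \<exists>e::'a. norm e = 1 \<and>
        (\<exists>(\<gamma>::'a \<Rightarrow> real) L. L-lipschitz_on UNIV \<gamma> \<and>
           \<Omega> \<inter> ball x0 r = {x \<in> ball x0 r. x \<bullet> e > \<gamma> (x - (x \<bullet> e) *\<^sub>R e)}))"

definition nonlocal_op :: "'a::euclidean_space set \<Rightarrow> ('a \<Rightarrow> 'a \<Rightarrow> real) \<Rightarrow> ('a \<Rightarrow> real) \<Rightarrow> 'a \<Rightarrow> real" where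
  "nonlocal_op \<Omega> m v x = (LINT y:\<Omega>|lebesgue. m x y * (v y - v x))"

definition in_L1_Linf :: "'a::euclidean_space set \<Rightarrow> ('a \<Rightarrow> real) \<Rightarrow> bool" where
  "in_L1_Linf \<Omega> f \<longleftrightarrow> set_integrable lebesgue \<Omega> f \<and>
      (\<exists>B. AE x in lebesgue. x \<in> \<Omega> \<longrightarrow> \<bar>f x\<bar> \<le> B)"

definition L1_norm :: "'a::euclidean_space set \<Rightarrow> ('a \<Rightarrow> real) \<Rightarrow> real" where
  "L1_norm \<Omega> f = (LINT x:\<Omega>|lebesgue. \<bar>f x\<bar>)"

definition Linf_norm :: "'a::euclidean_space set \<Rightarrow> ('a \<Rightarrow> real) \<Rightarrow> real" where
  "Linf_norm \<Omega> f = Inf {B. AE x in lebesgue. x \<in> \<Omega> \<longrightarrow> \<bar>f x\<bar> \<le> B}"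

definition X_norm :: "'a::euclidean_space set \<Rightarrow> ('a \<Rightarrow> real) \<Rightarrow> real" where
  "X_norm \<Omega> f = L1_norm \<Omega> f + Linf_norm \<Omega> f"

definition L2_norm :: "'a::euclidean_space set \<Rightarrow> ('a \<Rightarrow> real) \<Rightarrow> real" where
  "L2_norm \<Omega> f = sqrt (LINT x:\<Omega>|lebesgue. (f x)\<^sup>2)"

end

theory Submission
  imports Defs
begin

text \<open>
  Let \<open>M(t) = \<integral> u\<close>, \<open>P(t) = \<integral> ubar u\<close> and \<open>Q(t) = \<integral> u\<^sup>2\<close>.  Since \<open>\<M>\<close> conserves mass and
  \<open>c\<^sub>0 M \<le> \<integral> k u \<le> C\<^sub>0 M\<close>, the mass obeys the logistic inequalities
  \<open>a\<^sub>m\<^sub>i\<^sub>n M - C\<^sub>0 M\<^sup>2 \<le> M' \<le> a\<^sub>m\<^sub>a\<^sub>x M - c\<^sub>0 M\<^sup>2\<close> and stays between two positive constants; the lower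
  \<open>L\<^sup>2\<close> bound follows from \<open>M\<^sup>2 \<le> |\<Omega>| Q\<close>.  For the upper bound, symmetry of \<open>m\<close> and stationarity
  of \<open>ubar\<close> give \<open>P' = (A - \<integral> k u) P\<close> with \<open>A = \<integral> k ubar\<close>, while Picone's inequality (AM-GM weighted
  by \<open>ubar\<close>) gives \<open>Q' \<le> 2 (A - \<integral> k u) Q\<close>.  Hence \<open>Q / P\<^sup>2\<close> is nonincreasing, and
  \<open>P \<le> \<parallel>ubar\<parallel>\<^sub>\<infinity> M\<close> is bounded.
\<close>

section \<open>Scalar differential inequalities\<close>

lemma continuous_on_Icc_0_if_DERIV:
  fixes F F' :: "real \<Rightarrow> real"
  assumes lim0: "(F \<longlongrightarrow> F 0) (at_right 0)"
    and deriv: "\<And>s. 0 < s \<Longrightarrow> s \<le> t \<Longrightarrow> (F has_real_derivative F' s) (at s)"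
  shows "continuous_on {0..t} F"
proof (cases "0 < t")
  case False
  then show ?thesis by (cases "t = 0") (auto simp: continuous_on_sing)
next
  case True
  show ?thesis
  proof (rule continuous_on_eq_continuous_within[THEN iffD2], intro ballI)
    fix x assume x: "x \<in> {0..t}"
    show "continuous (at x within {0..t}) F"
    proof (cases "x = 0")
      case True
      with lim0 at_within_Icc_at_right[OF \<open>0 < t\<close>] show ?thesis
        by (simp add: continuous_within)
    next
      case False
      with x have "0 < x" "x \<le> t" by auto
      from deriv[OF this] have "isCont F x" by (rule DERIV_isCont)
      then show ?thesis by (rule continuous_at_imp_continuous_at_within)
    qed
  qed
qed

lemma DERIV_nonneg_imp_increasing_from_0:
  fixes F F' :: "real \<Rightarrow> real"
  assumes "0 \<le> t" and "(F \<longlongrightarrow> F 0) (at_right 0)"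
    and deriv: "\<And>s. 0 < s \<Longrightarrow> s \<le> t \<Longrightarrow> (F has_real_derivative F' s) (at s)"
    and nonneg: "\<And>s. 0 < s \<Longrightarrow> s < t \<Longrightarrow> 0 \<le> F' s"
  shows "F 0 \<le> F t"
  using DERIV_nonneg_imp_increasing_open[OF \<open>0 \<le> t\<close> _ continuous_on_Icc_0_if_DERIV[OF assms(2) deriv]]
    deriv nonneg by fastforce

lemma DERIV_exp_mult:
  fixes F :: "real \<Rightarrow> real"
  assumes "(F has_real_derivative D) (at s)"
  shows "((\<lambda>s. exp (c * s) * F s) has_real_derivative exp (c * s) * (c * F s + D)) (at s)"
proof -
  have "((\<lambda>s. exp (c * s)) has_real_derivative exp (c * s) * c) (at s)"
    using DERIV_chain2[OF DERIV_exp DERIV_cmult[OF DERIV_ident, of c]] by simp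
  from DERIV_mult[OF this assms] show ?thesis by (simp add: algebra_simps)
qed

text \<open>Gronwall: \<open>F' \<ge> - c F\<close> makes \<open>exp (c s) F s\<close> nondecreasing.\<close>
lemma DERIV_ge_linear_imp_pos:
  fixes F F' :: "real \<Rightarrow> real"
  assumes "0 \<le> t" and pos0: "0 < F 0" and lim0: "(F \<longlongrightarrow> F 0) (at_right 0)"
    and deriv: "\<And>s. 0 < s \<Longrightarrow> s \<le> t \<Longrightarrow> (F has_real_derivative F' s) (at s)"
    and lower: "\<And>s. 0 < s \<Longrightarrow> s < t \<Longrightarrow> - c * F s \<le> F' s"
  shows "0 < F t"
proof -
  have "exp (c * 0) * F 0 \<le> exp (c * t) * F t"
  proof (rule DERIV_nonneg_imp_increasing_from_0[OF \<open>0 \<le> t\<close>])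
    show "((\<lambda>s. exp (c * s) * F s) \<longlongrightarrow> exp (c * 0) * F 0) (at_right 0)"
      by (intro tendsto_intros lim0)
    show "((\<lambda>s. exp (c * s) * F s) has_real_derivative exp (c * s) * (c * F s + F' s)) (at s)"
      if "0 < s" "s \<le> t" for s
      using DERIV_exp_mult[OF deriv[OF that]] .
    show "0 \<le> exp (c * s) * (c * F s + F' s)" if "0 < s" "s < t" for s
      using lower[OF that] by simp
  qed
  with pos0 have "0 < exp (c * t) * F t" by simp
  then show ?thesis by (simp add: zero_less_mult_iff)
qed

text \<open>Comparison with the logistic equation \<open>F' = \<alpha> F - \<beta> F\<^sup>2\<close>, via the linear
  equation satisfied by \<open>1 / F\<close>.\<close>
lemma logistic_upper_bound:
  fixes F F' :: "real \<Rightarrow> real"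
  assumes "0 \<le> t" and "0 < \<alpha>" "0 < \<beta>" and pos: "\<And>s. 0 \<le> s \<Longrightarrow> 0 < F s"
    and lim0: "(F \<longlongrightarrow> F 0) (at_right 0)"
    and deriv: "\<And>s. 0 < s \<Longrightarrow> (F has_real_derivative F' s) (at s)"
    and upper: "\<And>s. 0 < s \<Longrightarrow> F' s \<le> \<alpha> * F s - \<beta> * (F s)\<^sup>2"
  shows "F t \<le> max (F 0) (\<alpha> / \<beta>)"
proof -
  define G where "G s = inverse (F s) - \<beta> / \<alpha>" for s
  have "exp (\<alpha> * 0) * G 0 \<le> exp (\<alpha> * t) * G t"
  proof (rule DERIV_nonneg_imp_increasing_from_0[OF \<open>0 \<le> t\<close>])
    show "((\<lambda>s. exp (\<alpha> * s) * G s) \<longlongrightarrow> exp (\<alpha> * 0) * G 0) (at_right 0)"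
      unfolding G_def using pos[of 0] by (intro tendsto_intros lim0) auto
    fix s :: real assume "0 < s"
    then have Fs: "0 < F s" using pos by simp
    have "(G has_real_derivative - (F' s / (F s * F s))) (at s)"
      unfolding G_def using DERIV_diff[OF DERIV_inverse_fun[OF deriv] DERIV_const] \<open>0 < s\<close> Fs
      by (simp add: divide_inverse)
    then show "((\<lambda>s. exp (\<alpha> * s) * G s) has_real_derivative
        exp (\<alpha> * s) * (\<alpha> * G s + - (F' s / (F s * F s)))) (at s)"
      by (rule DERIV_exp_mult)
    have "F' s / (F s * F s) \<le> (\<alpha> * F s - \<beta> * (F s)\<^sup>2) / (F s * F s)"
      using upper[OF \<open>0 < s\<close>] by (simp add: divide_right_mono)
    also have "\<dots> = \<alpha> * G s" unfolding G_def using Fs \<open>0 < \<alpha>\<close>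
      by (simp add: field_simps power2_eq_square)
    finally show "0 \<le> exp (\<alpha> * s) * (\<alpha> * G s + - (F' s / (F s * F s)))" by simp
  qed
  then have G0: "G 0 \<le> exp (\<alpha> * t) * G t" by simp
  have Ft: "0 < F t" using pos \<open>0 \<le> t\<close> by simp
  show ?thesis
  proof (cases "0 \<le> G t")
    case True
    then have "\<beta> / \<alpha> \<le> inverse (F t)" unfolding G_def by simp
    with Ft \<open>0 < \<alpha>\<close> \<open>0 < \<beta>\<close> have "F t \<le> \<alpha> / \<beta>" by (simp add: field_simps)
    then show ?thesis by simp
  next
    case False
    have "1 \<le> exp (\<alpha> * t)" using \<open>0 < \<alpha>\<close> \<open>0 \<le> t\<close> by simp
    then have "exp (\<alpha> * t) * G t \<le> G t" using False mult_right_mono_neg[of 1 "exp (\<alpha> * t)" "G t"] by simp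
    with G0 have "inverse (F 0) \<le> inverse (F t)" unfolding G_def by simp
    with Ft pos[of 0] have "F t \<le> F 0" by simp
    then show ?thesis by simp
  qed
qed

lemma logistic_lower_bound:
  fixes F F' :: "real \<Rightarrow> real"
  assumes "0 \<le> t" and "0 < \<alpha>" "0 < \<beta>" and pos: "\<And>s. 0 \<le> s \<Longrightarrow> 0 < F s"
    and lim0: "(F \<longlongrightarrow> F 0) (at_right 0)"
    and deriv: "\<And>s. 0 < s \<Longrightarrow> (F has_real_derivative F' s) (at s)"
    and lower: "\<And>s. 0 < s \<Longrightarrow> \<alpha> * F s - \<beta> * (F s)\<^sup>2 \<le> F' s"
  shows "min (F 0) (\<alpha> / \<beta>) \<le> F t"
proof -
  define G where "G s = \<beta> / \<alpha> - inverse (F s)" for s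
  have "exp (\<alpha> * 0) * G 0 \<le> exp (\<alpha> * t) * G t"
  proof (rule DERIV_nonneg_imp_increasing_from_0[OF \<open>0 \<le> t\<close>])
    show "((\<lambda>s. exp (\<alpha> * s) * G s) \<longlongrightarrow> exp (\<alpha> * 0) * G 0) (at_right 0)"
      unfolding G_def using pos[of 0] by (intro tendsto_intros lim0) auto
    fix s :: real assume "0 < s"
    then have Fs: "0 < F s" using pos by simp
    have "(G has_real_derivative F' s / (F s * F s)) (at s)"
      unfolding G_def using DERIV_diff[OF DERIV_const DERIV_inverse_fun[OF deriv]] \<open>0 < s\<close> Fs
      by (simp add: divide_inverse)
    then show "((\<lambda>s. exp (\<alpha> * s) * G s) has_real_derivative
        exp (\<alpha> * s) * (\<alpha> * G s + F' s / (F s * F s))) (at s)"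
      by (rule DERIV_exp_mult)
    have "- (\<alpha> * G s) = (\<alpha> * F s - \<beta> * (F s)\<^sup>2) / (F s * F s)"
      unfolding G_def using Fs \<open>0 < \<alpha>\<close> by (simp add: field_simps power2_eq_square)
    also have "\<dots> \<le> F' s / (F s * F s)"
      using lower[OF \<open>0 < s\<close>] by (simp add: divide_right_mono)
    finally show "0 \<le> exp (\<alpha> * s) * (\<alpha> * G s + F' s / (F s * F s))" by simp
  qed
  then have G0: "G 0 \<le> exp (\<alpha> * t) * G t" by simp
  have Ft: "0 < F t" using pos \<open>0 \<le> t\<close> by simp
  show ?thesis
  proof (cases "0 \<le> G t")
    case True
    then have "inverse (F t) \<le> \<beta> / \<alpha>" unfolding G_def by simp
    with Ft \<open>0 < \<alpha>\<close> \<open>0 < \<beta>\<close> have "\<alpha> / \<beta> \<le> F t" by (simp add: field_simps)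
    then show ?thesis by simp
  next
    case False
    have "1 \<le> exp (\<alpha> * t)" using \<open>0 < \<alpha>\<close> \<open>0 \<le> t\<close> by simp
    then have "exp (\<alpha> * t) * G t \<le> G t" using False mult_right_mono_neg[of 1 "exp (\<alpha> * t)" "G t"] by simp
    with G0 have "inverse (F t) \<le> inverse (F 0)" unfolding G_def by simp
    with Ft pos[of 0] have "F 0 \<le> F t" by simp
    then show ?thesis by simp
  qed
qed

lemma ratio_square_nonincreasing:
  fixes P Q Q' c :: "real \<Rightarrow> real"
  assumes "0 \<le> t" and pos: "\<And>s. 0 \<le> s \<Longrightarrow> 0 < P s"
    and limP: "(P \<longlongrightarrow> P 0) (at_right 0)" and limQ: "(Q \<longlongrightarrow> Q 0) (at_right 0)"
    and derivP: "\<And>s. 0 < s \<Longrightarrow> (P has_real_derivative c s * P s) (at s)"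
    and derivQ: "\<And>s. 0 < s \<Longrightarrow> (Q has_real_derivative Q' s) (at s)"
    and upper: "\<And>s. 0 < s \<Longrightarrow> Q' s \<le> 2 * c s * Q s"
  shows "Q t / (P t)\<^sup>2 \<le> Q 0 / (P 0)\<^sup>2"
proof -
  have "- (Q 0 / (P 0)\<^sup>2) \<le> - (Q t / (P t)\<^sup>2)"
  proof (rule DERIV_nonneg_imp_increasing_from_0[OF \<open>0 \<le> t\<close>])
    show "((\<lambda>s. - (Q s / (P s)\<^sup>2)) \<longlongrightarrow> - (Q 0 / (P 0)\<^sup>2)) (at_right 0)"
      using pos[of 0] by (intro tendsto_intros limP limQ) auto
    fix s :: real assume "0 < s"
    then have Ps: "0 < P s" using pos by simp
    have "((\<lambda>s. (P s)\<^sup>2) has_real_derivative 2 * c s * (P s)\<^sup>2) (at s)"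
      using DERIV_mult[OF derivP derivP, OF \<open>0 < s\<close> \<open>0 < s\<close>] by (simp add: power2_eq_square algebra_simps)
    from DERIV_minus[OF DERIV_divide[OF derivQ[OF \<open>0 < s\<close>] this]] Ps
    show "((\<lambda>s. - (Q s / (P s)\<^sup>2)) has_real_derivative
        - ((Q' s * (P s)\<^sup>2 - Q s * (2 * c s * (P s)\<^sup>2)) / ((P s)\<^sup>2 * (P s)\<^sup>2))) (at s)"
      by simp
    have "Q' s * (P s)\<^sup>2 - Q s * (2 * c s * (P s)\<^sup>2) = (P s)\<^sup>2 * (Q' s - 2 * c s * Q s)"
      by (simp add: algebra_simps)
    also have "\<dots> \<le> 0" using upper[OF \<open>0 < s\<close>] by (simp add: mult_nonneg_nonpos)
    finally have "Q' s * (P s)\<^sup>2 - Q s * (2 * c s * (P s)\<^sup>2) \<le> 0" .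
    from divide_nonpos_pos[OF this, of "(P s)\<^sup>2 * (P s)\<^sup>2"] Ps
    show "0 \<le> - ((Q' s * (P s)\<^sup>2 - Q s * (2 * c s * (P s)\<^sup>2)) / ((P s)\<^sup>2 * (P s)\<^sup>2))"
      by simp
  qed
  then show ?thesis by simp
qed

lemma mult_le_weighted_squares:
  fixes a b p q :: real
  assumes "0 < p" "0 < q"
  shows "a * b \<le> a\<^sup>2 * q / p / 2 + b\<^sup>2 * p / q / 2"
proof -
  have "0 \<le> (a * q - b * p)\<^sup>2" by simp
  then have "2 * (a * b) * (p * q) \<le> a\<^sup>2 * q * q + b\<^sup>2 * p * p" by (simp add: algebra_simps power2_eq_square)
  with assms show ?thesis by (simp add: field_simps power2_eq_square)
qed

section \<open>Essentially bounded functions on a bounded open domain\<close>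

locale bounded_open_domain =
  fixes \<Omega> :: "'n::euclidean_space set"
  assumes open_domain: "open \<Omega>" and bounded_domain: "bounded \<Omega>" and domain_nonempty: "\<Omega> \<noteq> {}"
begin

abbreviation "L \<equiv> lebesgue_on \<Omega>"

lemma domain_lmeasurable: "\<Omega> \<in> lmeasurable"
  using lmeasurable_interior[OF bounded_domain] open_domain by (simp add: interior_open)

lemma domain_sets [simp]: "\<Omega> \<in> sets lebesgue"
  using domain_lmeasurable by (simp add: fmeasurableD)

lemma domain_sets' [simp]: "\<Omega> \<inter> space lebesgue \<in> sets lebesgue" by simp

lemma space_L [simp]: "space L = \<Omega>" by (simp add: space_restrict_space)

sublocale L: finite_measure L by (rule finite_measure_lebesgue_on[OF domain_lmeasurable])

sublocale LL: pair_sigma_finite L L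
  by (simp add: pair_sigma_finite_def L.sigma_finite_measure_axioms)

lemma measure_domain_pos: "0 < measure L \<Omega>"
proof -
  have "0 < measure lebesgue \<Omega>"
    using open_not_negligible[OF open_domain domain_nonempty] negligible_iff_measure0[OF domain_lmeasurable]
      measure_nonneg[of lebesgue \<Omega>] by linarith
  then show ?thesis by (simp add: measure_restrict_space)
qed

lemma not_AE_False: "\<not> (AE x in L. False)"
proof
  assume "AE x in L. False"
  then have "emeasure L \<Omega> = 0" by (simp add: AE_iff_measurable[OF _ refl])
  with measure_domain_pos show False by (simp add: L.emeasure_eq_measure)
qed

lemma set_integral_eq_integral_L: "(LINT x:\<Omega>|lebesgue. f x) = (\<integral>x. f x \<partial>L)" for f :: "'n \<Rightarrow> real"
  unfolding set_lebesgue_integral_def by (rule integral_restrict_space[OF domain_sets', symmetric])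

lemma set_integrable_iff_integrable_L: "set_integrable lebesgue \<Omega> f \<longleftrightarrow> integrable L f"
  for f :: "'n \<Rightarrow> real"
  unfolding set_integrable_def by (rule integrable_restrict_space[OF domain_sets', symmetric])

lemma AE_lebesgue_domain_iff: "(AE x in lebesgue. x \<in> \<Omega> \<longrightarrow> P x) \<longleftrightarrow> (AE x in L. P x)"
  by (rule AE_restrict_space_iff[OF domain_sets', symmetric])

text \<open>Membership in \<open>L\<^sup>1 \<inter> L\<^sup>\<infinity>\<close>: on a domain of finite measure, this is just measurability plus
  an essential bound.\<close>
definition ess_bdd :: "('n \<Rightarrow> real) \<Rightarrow> bool" where
  "ess_bdd f \<longleftrightarrow> f \<in> borel_measurable L \<and> (\<exists>B. AE x in L. \<bar>f x\<bar> \<le> B)"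

lemma ess_bdd_if_bounded: "f \<in> borel_measurable L \<Longrightarrow> (\<And>x. x \<in> \<Omega> \<Longrightarrow> \<bar>f x\<bar> \<le> B) \<Longrightarrow> ess_bdd f"
  unfolding ess_bdd_def by (intro conjI exI[of _ B] AE_I2) auto

lemma ess_bdd_integrable:
  assumes "ess_bdd f"
  shows "integrable L f"
proof -
  obtain B where "AE x in L. \<bar>f x\<bar> \<le> B" "f \<in> borel_measurable L"
    using assms unfolding ess_bdd_def by auto
  then show ?thesis by (intro L.integrable_const_bound[where B=B]) auto
qed

lemma in_L1_Linf_iff_ess_bdd: "in_L1_Linf \<Omega> f \<longleftrightarrow> ess_bdd f"
  unfolding in_L1_Linf_def set_integrable_iff_integrable_L AE_lebesgue_domain_iff
  using ess_bdd_integrable ess_bdd_def by blast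

lemma ess_bdd_nonneg_bound:
  assumes "ess_bdd f"
  obtains B where "0 \<le> B" "AE x in L. \<bar>f x\<bar> \<le> B"
proof -
  obtain B where "AE x in L. \<bar>f x\<bar> \<le> B" using assms unfolding ess_bdd_def by auto
  then have "AE x in L. \<bar>f x\<bar> \<le> max B 0" by (rule eventually_mono) auto
  then show ?thesis using that[of "max B 0"] by auto
qed

lemma ess_bound_nonneg:
  fixes f :: "'n \<Rightarrow> real"
  assumes "AE x in L. \<bar>f x\<bar> \<le> B"
  shows "0 \<le> B"
proof (rule ccontr)
  assume neg: "\<not> 0 \<le> B"
  from assms have "AE x in L. False"
  proof (rule eventually_mono)
    fix x assume "\<bar>f x\<bar> \<le> B"
    with abs_ge_zero[of "f x"] neg show False by linarith
  qed
  with not_AE_False show False ..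
qed

lemma Linf_norm_nonneg:
  assumes "ess_bdd f"
  shows "0 \<le> Linf_norm \<Omega> f"
proof -
  obtain B where "AE x in L. \<bar>f x\<bar> \<le> B" using assms unfolding ess_bdd_def by auto
  then show ?thesis unfolding Linf_norm_def AE_lebesgue_domain_iff
    by (intro cInf_greatest) (auto intro: ess_bound_nonneg)
qed

lemma AE_abs_le_Linf_norm:
  assumes "ess_bdd f"
  shows "AE x in L. \<bar>f x\<bar> \<le> Linf_norm \<Omega> f"
proof -
  define S where "S = {B. AE x in L. \<bar>f x\<bar> \<le> B}"
  have Linf: "Linf_norm \<Omega> f = Inf S" unfolding Linf_norm_def S_def AE_lebesgue_domain_iff ..
  obtain B0 where B0: "B0 \<in> S" using assms unfolding ess_bdd_def S_def by auto
  have bdd: "bdd_below S" by (auto simp: bdd_below_def S_def intro: ess_bound_nonneg)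
  have "AE x in L. \<bar>f x\<bar> \<le> Inf S + 1 / Suc n" for n
  proof -
    have "Inf S < Inf S + 1 / Suc n" by simp
    then obtain B where "B \<in> S" "B < Inf S + 1 / Suc n" using cInf_less_iff[of S] B0 bdd by blast
    then show ?thesis unfolding S_def by (auto elim!: eventually_mono)
  qed
  then have "AE x in L. \<forall>n. \<bar>f x\<bar> \<le> Inf S + 1 / Suc n" by (simp add: AE_all_countable)
  then show ?thesis
  proof (rule eventually_mono)
    fix x assume bound: "\<forall>n. \<bar>f x\<bar> \<le> Inf S + 1 / Suc n"
    show "\<bar>f x\<bar> \<le> Linf_norm \<Omega> f"
    proof (rule ccontr)
      assume "\<not> ?thesis"
      then have "0 < \<bar>f x\<bar> - Inf S" unfolding Linf by simp
      then obtain n where "inverse (real (Suc n)) < \<bar>f x\<bar> - Inf S" using reals_Archimedean by blast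
      with bound[rule_format, of n] show False by (simp add: field_simps)
    qed
  qed
qed

lemma L1_norm_eq_integral: "L1_norm \<Omega> f = (\<integral>x. \<bar>f x\<bar> \<partial>L)"
  unfolding L1_norm_def set_integral_eq_integral_L ..

lemma L1_norm_nonneg: "0 \<le> L1_norm \<Omega> f"
  unfolding L1_norm_eq_integral by simp

lemma ess_bdd_mult: "ess_bdd f \<Longrightarrow> ess_bdd g \<Longrightarrow> ess_bdd (\<lambda>x. f x * g x)"
proof -
  assume "ess_bdd f" "ess_bdd g"
  then obtain Bf Bg where "AE x in L. \<bar>f x\<bar> \<le> Bf" "AE x in L. \<bar>g x\<bar> \<le> Bg"
    and "f \<in> borel_measurable L" "g \<in> borel_measurable L" unfolding ess_bdd_def by auto
  moreover from this(1,2) have "AE x in L. \<bar>f x * g x\<bar> \<le> Bf * Bg"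
    by eventually_elim (auto simp: abs_mult intro!: mult_mono order_trans[OF abs_ge_zero])
  ultimately show ?thesis unfolding ess_bdd_def by auto
qed

lemma ess_bdd_add: "ess_bdd f \<Longrightarrow> ess_bdd g \<Longrightarrow> ess_bdd (\<lambda>x. f x + g x)"
proof -
  assume "ess_bdd f" "ess_bdd g"
  then obtain Bf Bg where "AE x in L. \<bar>f x\<bar> \<le> Bf" "AE x in L. \<bar>g x\<bar> \<le> Bg"
    and "f \<in> borel_measurable L" "g \<in> borel_measurable L" unfolding ess_bdd_def by auto
  moreover from this(1,2) have "AE x in L. \<bar>f x + g x\<bar> \<le> Bf + Bg" by eventually_elim auto
  ultimately show ?thesis unfolding ess_bdd_def by auto
qed

lemma ess_bdd_const: "ess_bdd (\<lambda>x. c)"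
  unfolding ess_bdd_def by auto

lemma ess_bdd_cmult: "ess_bdd f \<Longrightarrow> ess_bdd (\<lambda>x. c * f x)"
  using ess_bdd_mult[OF ess_bdd_const] .

lemma ess_bdd_diff: "ess_bdd f \<Longrightarrow> ess_bdd g \<Longrightarrow> ess_bdd (\<lambda>x. f x - g x)"
  using ess_bdd_add[of f "\<lambda>x. - 1 * g x"] ess_bdd_cmult[of g "- 1"] by simp

lemma ess_bdd_divide: "ess_bdd f \<Longrightarrow> ess_bdd (\<lambda>x. f x / c)"
  using ess_bdd_mult[OF _ ess_bdd_const, of f "1 / c"] by simp

lemma ess_bdd_AE_cong:
  assumes "ess_bdd f" "g \<in> borel_measurable L" "AE x in L. f x = g x"
  shows "ess_bdd g"
proof -
  obtain B where "AE x in L. \<bar>f x\<bar> \<le> B" using assms unfolding ess_bdd_def by auto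
  with assms(3) have "AE x in L. \<bar>g x\<bar> \<le> B" by eventually_elim auto
  with assms(2) show ?thesis unfolding ess_bdd_def by auto
qed

lemma abs_integral_mult_le_Linf_L1:
  assumes f: "ess_bdd f" and g: "ess_bdd g"
  shows "\<bar>\<integral>x. g x * f x \<partial>L\<bar> \<le> Linf_norm \<Omega> g * L1_norm \<Omega> f"
proof -
  have "\<bar>\<integral>x. g x * f x \<partial>L\<bar> \<le> (\<integral>x. \<bar>g x * f x\<bar> \<partial>L)" by (rule integral_abs_bound)
  also have "\<dots> \<le> (\<integral>x. Linf_norm \<Omega> g * \<bar>f x\<bar> \<partial>L)"
  proof (rule integral_mono_AE)
    show "integrable L (\<lambda>x. \<bar>g x * f x\<bar>)"
      by (rule integrable_abs[OF ess_bdd_integrable[OF ess_bdd_mult[OF g f]]])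
    show "integrable L (\<lambda>x. Linf_norm \<Omega> g * \<bar>f x\<bar>)"
      using ess_bdd_integrable[OF f] by simp
    show "AE x in L. \<bar>g x * f x\<bar> \<le> Linf_norm \<Omega> g * \<bar>f x\<bar>"
      using AE_abs_le_Linf_norm[OF g] by eventually_elim (simp add: abs_mult mult_right_mono)
  qed
  also have "\<dots> = Linf_norm \<Omega> g * L1_norm \<Omega> f" unfolding L1_norm_eq_integral by simp
  finally show ?thesis .
qed

lemma square_integral_le_integral_square:
  assumes "ess_bdd f"
  shows "(\<integral>x. f x \<partial>L)\<^sup>2 / measure L \<Omega> \<le> (\<integral>x. f x * f x \<partial>L)"
proof -
  let ?\<mu> = "measure L \<Omega>" and ?I = "\<integral>x. f x \<partial>L"
  define \<beta> where "\<beta> = ?I / ?\<mu>"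
  have "integrable L f" "integrable L (\<lambda>x. f x * f x)"
    using assms by (auto intro: ess_bdd_integrable ess_bdd_mult)
  then have "(\<integral>x. (f x - \<beta>) * (f x - \<beta>) \<partial>L) = (\<integral>x. f x * f x \<partial>L) - 2 * \<beta> * ?I + \<beta> * \<beta> * ?\<mu>"
    by (simp add: algebra_simps integral_add integral_diff)
  moreover have "0 \<le> (\<integral>x. (f x - \<beta>) * (f x - \<beta>) \<partial>L)" by simp
  moreover have "2 * \<beta> * ?I - \<beta> * \<beta> * ?\<mu> = ?I\<^sup>2 / ?\<mu>"
    unfolding \<beta>_def using measure_domain_pos by (simp add: field_simps power2_eq_square)
  ultimately show ?thesis by linarith
qed

lemma X_norm_tendsto_zeroD:
  assumes ev: "eventually (\<lambda>s. ess_bdd (f s)) F" and X: "((\<lambda>s. X_norm \<Omega> (f s)) \<longlongrightarrow> 0) F"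
  shows "((\<lambda>s. L1_norm \<Omega> (f s)) \<longlongrightarrow> 0) F" and "((\<lambda>s. Linf_norm \<Omega> (f s)) \<longlongrightarrow> 0) F"
proof -
  have "eventually (\<lambda>s. 0 \<le> L1_norm \<Omega> (f s) \<and> 0 \<le> Linf_norm \<Omega> (f s)) F"
    using ev by (rule eventually_mono) (simp add: L1_norm_nonneg Linf_norm_nonneg)
  then have "eventually (\<lambda>s. 0 \<le> L1_norm \<Omega> (f s) \<and> L1_norm \<Omega> (f s) \<le> X_norm \<Omega> (f s)
      \<and> 0 \<le> Linf_norm \<Omega> (f s) \<and> Linf_norm \<Omega> (f s) \<le> X_norm \<Omega> (f s)) F"
    by (rule eventually_mono) (simp add: X_norm_def)
  then show "((\<lambda>s. L1_norm \<Omega> (f s)) \<longlongrightarrow> 0) F" "((\<lambda>s. Linf_norm \<Omega> (f s)) \<longlongrightarrow> 0) F"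
    by (auto intro: tendsto_sandwich[OF _ _ tendsto_const X] elim: eventually_mono)
qed

lemma tendsto_integral_mult_zero:
  assumes g: "ess_bdd g" and ev: "eventually (\<lambda>s. ess_bdd (f s)) F"
    and X: "((\<lambda>s. X_norm \<Omega> (f s)) \<longlongrightarrow> 0) F"
  shows "((\<lambda>s. \<integral>x. g x * f s x \<partial>L) \<longlongrightarrow> 0) F"
proof (rule Lim_null_comparison)
  show "eventually (\<lambda>s. norm (\<integral>x. g x * f s x \<partial>L) \<le> Linf_norm \<Omega> g * L1_norm \<Omega> (f s)) F"
    using ev by (rule eventually_mono) (use abs_integral_mult_le_Linf_L1 g in auto)
  show "((\<lambda>s. Linf_norm \<Omega> g * L1_norm \<Omega> (f s)) \<longlongrightarrow> 0) F"
    using tendsto_mult_right_zero[OF X_norm_tendsto_zeroD(1)[OF ev X]] .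
qed

lemma tendsto_integral_square_zero:
  assumes ev: "eventually (\<lambda>s. ess_bdd (f s)) F" and X: "((\<lambda>s. X_norm \<Omega> (f s)) \<longlongrightarrow> 0) F"
  shows "((\<lambda>s. \<integral>x. f s x * f s x \<partial>L) \<longlongrightarrow> 0) F"
proof (rule Lim_null_comparison)
  show "eventually (\<lambda>s. norm (\<integral>x. f s x * f s x \<partial>L) \<le> Linf_norm \<Omega> (f s) * L1_norm \<Omega> (f s)) F"
    using ev by (rule eventually_mono) (use abs_integral_mult_le_Linf_L1[of "f s" "f s" for s] in auto)
  show "((\<lambda>s. Linf_norm \<Omega> (f s) * L1_norm \<Omega> (f s)) \<longlongrightarrow> 0) F"
    using tendsto_mult[OF X_norm_tendsto_zeroD(2,1)[OF ev X]] by simp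
qed

lemma eventually_at_0_shift_nonneg: "0 < t \<Longrightarrow> eventually (\<lambda>h::real. h \<noteq> 0 \<and> 0 \<le> t + h) (at 0)"
  unfolding eventually_at by (intro exI[of _ t]) (auto simp: dist_real_def)

context
  fixes u u' :: "real \<Rightarrow> 'n \<Rightarrow> real" and t :: real
  assumes ess_bdd_u: "\<And>s. 0 \<le> s \<Longrightarrow> ess_bdd (u s)" and ess_bdd_u': "ess_bdd (u' t)" and "0 < t"
    and deriv_u: "((\<lambda>h. X_norm \<Omega> (\<lambda>x. (u (t + h) x - u t x) / h - u' t x)) \<longlongrightarrow> 0) (at 0)"
begin

definition remainder :: "real \<Rightarrow> 'n \<Rightarrow> real" where
  "remainder h = (\<lambda>x. (u (t + h) x - u t x) / h - u' t x)"

lemma eventually_ess_bdd_remainder: "eventually (\<lambda>h. ess_bdd (remainder h)) (at 0)"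
  using eventually_at_0_shift_nonneg[OF \<open>0 < t\<close>]
  by (rule eventually_mono)
    (use \<open>0 < t\<close> in \<open>auto simp: remainder_def intro!: ess_bdd_diff ess_bdd_divide ess_bdd_u ess_bdd_u'\<close>)

lemma X_norm_remainder_tendsto: "((\<lambda>h. X_norm \<Omega> (remainder h)) \<longlongrightarrow> 0) (at 0)"
  using deriv_u by (simp add: remainder_def)

lemma has_real_derivative_integral_mult:
  assumes g: "ess_bdd g"
  shows "((\<lambda>s. \<integral>x. g x * u s x \<partial>L) has_real_derivative (\<integral>x. g x * u' t x \<partial>L)) (at t)"
proof -
  let ?I = "\<lambda>f. \<integral>x. g x * f x \<partial>L"
  have "eventually (\<lambda>h. ?I (u' t) + ?I (remainder h) = (?I (u (t + h)) - ?I (u t)) / h) (at 0)"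
    using eventually_at_0_shift_nonneg[OF \<open>0 < t\<close>]
  proof (rule eventually_mono)
    fix h :: real assume h: "h \<noteq> 0 \<and> 0 \<le> t + h"
    have "g x * remainder h x = g x * u (t + h) x / h - g x * u t x / h - g x * u' t x" for x
      using h by (simp add: remainder_def field_simps)
    then have "?I (remainder h) = ?I (u (t + h)) / h - ?I (u t) / h - ?I (u' t)"
      using h \<open>0 < t\<close> by (simp add: integral_diff ess_bdd_integrable ess_bdd_mult g ess_bdd_u ess_bdd_u')
    then show "?I (u' t) + ?I (remainder h) = (?I (u (t + h)) - ?I (u t)) / h"
      by (simp add: diff_divide_distrib)
  qed
  moreover have "((\<lambda>h. ?I (u' t) + ?I (remainder h)) \<longlongrightarrow> ?I (u' t) + 0) (at 0)"
    by (intro tendsto_add tendsto_const tendsto_integral_mult_zero[OF g]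
        eventually_ess_bdd_remainder X_norm_remainder_tendsto)
  ultimately show ?thesis
    unfolding DERIV_def using tendsto_cong by fastforce
qed

lemma difference_quotient_integral_square:
  assumes h: "h \<noteq> 0" "0 \<le> t + h" and bdd_D: "ess_bdd (remainder h)"
  shows "((\<integral>x. u (t + h) x * u (t + h) x \<partial>L) - (\<integral>x. u t x * u t x \<partial>L)) / h
    = 2 * (\<integral>x. u t x * u' t x \<partial>L) + 2 * (\<integral>x. u t x * remainder h x \<partial>L)
      + h * ((\<integral>x. u' t x * u' t x \<partial>L) + 2 * (\<integral>x. u' t x * remainder h x \<partial>L)
        + (\<integral>x. remainder h x * remainder h x \<partial>L))"
proof -
  let ?D = remainder
  have bdd_ut: "ess_bdd (u t)" and bdd_uth: "ess_bdd (u (t + h))"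
    using \<open>0 < t\<close> h by (auto intro: ess_bdd_u)
  have int: "integrable L (\<lambda>x. f x * g x)" if "ess_bdd f" "ess_bdd g" for f g
    using that by (intro ess_bdd_integrable ess_bdd_mult)
  note ints = int[OF bdd_uth bdd_uth] int[OF bdd_ut bdd_ut] int[OF bdd_ut ess_bdd_u'] int[OF bdd_ut bdd_D]
    int[OF ess_bdd_u' ess_bdd_u'] int[OF ess_bdd_u' bdd_D] int[OF bdd_D bdd_D]
  text \<open>Write \<open>u (t + h) = u t + h (u' t + remainder h)\<close> and expand the square.\<close>
  have expand: "u (t + h) x * u (t + h) x / h - u t x * u t x / h = 2 * (u t x * u' t x)
      + 2 * (u t x * ?D h x) + h * (u' t x * u' t x + 2 * (u' t x * ?D h x) + ?D h x * ?D h x)" for x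
    using h by (simp add: remainder_def divide_simps) (simp add: algebra_simps)
  have "((\<integral>x. u (t + h) x * u (t + h) x \<partial>L) - (\<integral>x. u t x * u t x \<partial>L)) / h
      = \<integral>x. u (t + h) x * u (t + h) x / h - u t x * u t x / h \<partial>L"
    using ints by (simp add: integral_diff diff_divide_distrib)
  also have "\<dots> = \<integral>x. 2 * (u t x * u' t x) + 2 * (u t x * ?D h x)
        + h * (u' t x * u' t x + 2 * (u' t x * ?D h x) + ?D h x * ?D h x) \<partial>L"
    by (simp only: expand)
  also have "\<dots> = 2 * (\<integral>x. u t x * u' t x \<partial>L) + 2 * (\<integral>x. u t x * ?D h x \<partial>L)
      + h * ((\<integral>x. u' t x * u' t x \<partial>L) + 2 * (\<integral>x. u' t x * ?D h x \<partial>L) + (\<integral>x. ?D h x * ?D h x \<partial>L))"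
    using ints by (simp add: integral_add)
  finally show ?thesis .
qed

lemma has_real_derivative_integral_square:
  "((\<lambda>s. \<integral>x. u s x * u s x \<partial>L) has_real_derivative 2 * (\<integral>x. u t x * u' t x \<partial>L)) (at t)"
proof -
  let ?I = "\<lambda>f g. \<integral>x. f x * g x \<partial>L"
  let ?D = remainder
  define R where "R h = ?I (u' t) (u' t) + 2 * ?I (u' t) (?D h) + ?I (?D h) (?D h)" for h
  have "eventually (\<lambda>h. 2 * ?I (u t) (u' t) + 2 * ?I (u t) (?D h) + h * R h
      = (?I (u (t + h)) (u (t + h)) - ?I (u t) (u t)) / h) (at 0)"
    using eventually_conj[OF eventually_at_0_shift_nonneg[OF \<open>0 < t\<close>] eventually_ess_bdd_remainder]
    by (rule eventually_mono) (simp add: difference_quotient_integral_square R_def)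
  moreover have "((\<lambda>h. 2 * ?I (u t) (u' t) + 2 * ?I (u t) (?D h) + h * R h) \<longlongrightarrow>
      2 * ?I (u t) (u' t) + 2 * 0 + 0 * (?I (u' t) (u' t) + 2 * 0 + 0)) (at 0)"
    unfolding R_def using \<open>0 < t\<close>
    by (intro tendsto_intros tendsto_integral_mult_zero tendsto_integral_square_zero ess_bdd_u ess_bdd_u'
        eventually_ess_bdd_remainder X_norm_remainder_tendsto) auto
  ultimately show ?thesis
    unfolding DERIV_def using tendsto_cong by fastforce
qed

end

context
  fixes u :: "real \<Rightarrow> 'n \<Rightarrow> real"
  assumes ess_bdd_u: "\<And>s. 0 \<le> s \<Longrightarrow> ess_bdd (u s)"
    and cont_u: "((\<lambda>s. X_norm \<Omega> (\<lambda>x. u s x - u 0 x)) \<longlongrightarrow> 0) (at_right 0)"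
begin

lemma eventually_ess_bdd_increment: "eventually (\<lambda>s. ess_bdd (\<lambda>x. u s x - u 0 x)) (at_right 0)"
  using eventually_at_right_less[of 0] by (rule eventually_mono) (auto intro!: ess_bdd_diff ess_bdd_u)

lemma tendsto_integral_mult_at_right_0:
  assumes g: "ess_bdd g"
  shows "((\<lambda>s. \<integral>x. g x * u s x \<partial>L) \<longlongrightarrow> (\<integral>x. g x * u 0 x \<partial>L)) (at_right 0)"
proof -
  let ?I = "\<lambda>f. \<integral>x. g x * f x \<partial>L"
  have "eventually (\<lambda>s. ?I (u 0) + ?I (\<lambda>x. u s x - u 0 x) = ?I (u s)) (at_right 0)"
    using eventually_at_right_less[of 0] by (rule eventually_mono)
      (simp add: right_diff_distrib integral_diff ess_bdd_integrable ess_bdd_mult g ess_bdd_u)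
  moreover have "((\<lambda>s. ?I (u 0) + ?I (\<lambda>x. u s x - u 0 x)) \<longlongrightarrow> ?I (u 0) + 0) (at_right 0)"
    by (intro tendsto_add tendsto_const tendsto_integral_mult_zero[OF g]
        eventually_ess_bdd_increment cont_u)
  ultimately show ?thesis using tendsto_cong by fastforce
qed

lemma tendsto_integral_square_at_right_0:
  "((\<lambda>s. \<integral>x. u s x * u s x \<partial>L) \<longlongrightarrow> (\<integral>x. u 0 x * u 0 x \<partial>L)) (at_right 0)"
proof -
  let ?I = "\<lambda>f g. \<integral>x. f x * g x \<partial>L"
  let ?E = "\<lambda>s x. u s x - u 0 x"
  have bdd_u0: "ess_bdd (u 0)" by (intro ess_bdd_u) auto
  have "eventually (\<lambda>s. ?I (u 0) (u 0) + 2 * ?I (u 0) (?E s) + ?I (?E s) (?E s) = ?I (u s) (u s))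
      (at_right 0)"
    using eventually_ess_bdd_increment
  proof (rule eventually_mono)
    fix s assume bdd_E: "ess_bdd (?E s)"
    have "u s x * u s x = u 0 x * u 0 x + 2 * (u 0 x * ?E s x) + ?E s x * ?E s x" for x
      by (simp add: algebra_simps)
    then show "?I (u 0) (u 0) + 2 * ?I (u 0) (?E s) + ?I (?E s) (?E s) = ?I (u s) (u s)"
      using bdd_u0 bdd_E by (simp add: integral_add ess_bdd_integrable ess_bdd_mult del: of_nat_add)
  qed
  moreover have "((\<lambda>s. ?I (u 0) (u 0) + 2 * ?I (u 0) (?E s) + ?I (?E s) (?E s))
      \<longlongrightarrow> ?I (u 0) (u 0) + 2 * 0 + 0) (at_right 0)"
    by (intro tendsto_intros tendsto_integral_mult_zero tendsto_integral_square_zero bdd_u0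
        eventually_ess_bdd_increment cont_u)
  ultimately show ?thesis using tendsto_cong by fastforce
qed

end

subsection \<open>A jointly measurable version of a Caratheodory kernel\<close>

lemma dense_sequence:
  obtains d :: "nat \<Rightarrow> 'n" where "\<And>j. d j \<in> \<Omega>"
    and "\<And>x e. x \<in> \<Omega> \<Longrightarrow> 0 < e \<Longrightarrow> \<exists>j. dist x (d j) < e"
proof -
  obtain B :: "'n set set" where "countable B" and basis: "topological_basis B"
    using ex_countable_basis by blast
  define D where "D = (\<lambda>b. SOME z. z \<in> b) ` {b\<in>B. b \<noteq> {} \<and> b \<subseteq> \<Omega>}"
  have "countable D" unfolding D_def using \<open>countable B\<close> by auto
  have D_sub: "D \<subseteq> \<Omega>" unfolding D_def by (auto intro: someI2_ex)
  have dense: "\<exists>z\<in>D. dist x z < e" if "x \<in> \<Omega>" "0 < e" for x e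
  proof -
    have "open (ball x e \<inter> \<Omega>)" "x \<in> ball x e \<inter> \<Omega>" using open_domain that by auto
    then obtain b where b: "b \<in> B" "x \<in> b" "b \<subseteq> ball x e \<inter> \<Omega>"
      using topological_basisE[OF basis] by metis
    then have "(SOME z. z \<in> b) \<in> b" "(SOME z. z \<in> b) \<in> D" unfolding D_def by (auto intro: someI)
    with b show ?thesis by (intro bexI[of _ "SOME z. z \<in> b"]) (auto simp: dist_commute)
  qed
  obtain x0 where "x0 \<in> \<Omega>" using domain_nonempty by blast
  with dense[of x0 1] have "D \<noteq> {}" by auto
  then have range: "range (from_nat_into D) = D"
    using \<open>countable D\<close> by (simp add: range_from_nat_into)
  show ?thesis
  proof
    show "from_nat_into D j \<in> \<Omega>" for j using range D_sub by auto
    show "\<exists>j. dist x (from_nat_into D j) < e" if xe: "x \<in> \<Omega>" "0 < e" for x e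
    proof -
      obtain z where "z \<in> D" "dist x z < e" using dense[OF xe] by blast
      moreover have "z \<in> range (from_nat_into D)" using range \<open>z \<in> D\<close> by simp
      then obtain j where "z = from_nat_into D j" by (rule rangeE)
      ultimately show ?thesis by blast
    qed
  qed
qed

text \<open>A Caratheodory function (measurable in \<open>y\<close>, continuous in \<open>x\<close>) agrees with a jointly measurable one:
  the pointwise limit of \<open>f (d\<^sub>n x) y\<close>, where \<open>d\<^sub>n x\<close> is the first point of a dense sequence
  within \<open>1 / (n + 1)\<close> of \<open>x\<close>.\<close>
lemma caratheodory_jointly_measurable:
  fixes f :: "'n \<Rightarrow> 'b \<Rightarrow> real" and M :: "'b measure"
  assumes meas: "\<And>x. x \<in> \<Omega> \<Longrightarrow> f x \<in> borel_measurable M"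
    and cont: "\<And>y. y \<in> Y \<Longrightarrow> continuous_on \<Omega> (\<lambda>x. f x y)"
  obtains F where "F \<in> borel_measurable (L \<Otimes>\<^sub>M M)"
    and "\<And>x y. x \<in> \<Omega> \<Longrightarrow> y \<in> Y \<Longrightarrow> F (x, y) = f x y"
proof -
  obtain d :: "nat \<Rightarrow> 'n" where d_in: "\<And>j. d j \<in> \<Omega>"
    and d_dense: "\<And>x e. x \<in> \<Omega> \<Longrightarrow> 0 < e \<Longrightarrow> \<exists>j. dist x (d j) < e"
    using dense_sequence by blast
  define idx where "idx n x = (LEAST j. dist x (d j) < 1 / Suc n)" for n x
  have dist_idx: "dist x (d (idx n x)) < 1 / Suc n" if "x \<in> \<Omega>" for x n
    unfolding idx_def by (rule LeastI_ex) (use d_dense[OF that] in simp)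
  have idx_meas: "idx n \<in> measurable L (count_space UNIV)" for n
    unfolding idx_def
  proof (rule measurable_Least)
    fix j
    have [measurable]: "(\<lambda>x. dist x (d j)) \<in> borel_measurable L"
      by (rule continuous_imp_measurable_on_sets_lebesgue) (auto intro!: continuous_intros)
    show "(\<lambda>x. dist x (d j) < 1 / Suc n) \<in> measurable L (count_space UNIV)" by measurable
  qed
  define F where "F z = lim (\<lambda>n. f (d (idx n (fst z))) (snd z))" for z
  show ?thesis
  proof
    show "F \<in> borel_measurable (L \<Otimes>\<^sub>M M)"
      unfolding F_def
    proof (rule borel_measurable_lim_metric, rule measurable_compose_countable[where f="\<lambda>j z. f (d j) (snd z)"])
      show "(\<lambda>z. f (d j) (snd z)) \<in> borel_measurable (L \<Otimes>\<^sub>M M)" for j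
        by (rule measurable_compose[OF measurable_snd meas[OF d_in]])
      show "(\<lambda>z. idx n (fst z)) \<in> measurable (L \<Otimes>\<^sub>M M) (count_space UNIV)" for n
        by (rule measurable_compose[OF measurable_fst idx_meas])
    qed
    fix x y assume "x \<in> \<Omega>" "y \<in> Y"
    have "(\<lambda>n. d (idx n x)) \<longlonglongrightarrow> x"
    proof (subst tendsto_dist_iff, rule Lim_null_comparison)
      show "\<forall>\<^sub>F n in sequentially. norm (dist (d (idx n x)) x) \<le> 1 / Suc n"
        using dist_idx[OF \<open>x \<in> \<Omega>\<close>] by (auto simp: dist_commute less_imp_le)
      show "(\<lambda>n. 1 / real (Suc n)) \<longlonglongrightarrow> 0"
        using LIMSEQ_inverse_real_of_nat by (simp add: inverse_eq_divide)
    qed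
    then have "(\<lambda>n. f (d (idx n x)) y) \<longlonglongrightarrow> f x y"
      by (rule continuous_on_tendsto_compose[OF cont[OF \<open>y \<in> Y\<close>] _ \<open>x \<in> \<Omega>\<close>]) (use d_in in auto)
    then show "F (x, y) = f x y" unfolding F_def by (simp add: limI)
  qed
qed

lemma symmetric_jointly_measurable_version:
  fixes m :: "'n \<Rightarrow> 'n \<Rightarrow> real"
  assumes m_nonneg: "\<forall>x\<in>\<Omega>. \<forall>y\<in>\<Omega>. 0 \<le> m x y"
    and m_sym: "\<forall>x\<in>\<Omega>. \<forall>y\<in>\<Omega>. m x y = m y x"
    and m_meas: "\<forall>x\<in>\<Omega>. (\<lambda>y. m x y) \<in> borel_measurable L"
    and m_cont: "AE y in L. continuous_on \<Omega> (\<lambda>x. m x y)"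
  obtains G N where "G \<in> borel_measurable (L \<Otimes>\<^sub>M L)" "N \<in> null_sets L"
    "\<And>x y. G (x, y) = G (y, x)" "\<And>x y. 0 \<le> G (x, y)"
    "\<And>x y. x \<in> \<Omega> - N \<Longrightarrow> y \<in> \<Omega> - N \<Longrightarrow> G (x, y) = m x y"
    "\<And>x y. x \<notin> \<Omega> - N \<Longrightarrow> G (x, y) = 0"
proof -
  obtain N where N: "{y \<in> space L. \<not> continuous_on \<Omega> (\<lambda>x. m x y)} \<subseteq> N"
    "emeasure L N = 0" "N \<in> sets L"
    using m_cont by (rule AE_E)
  have meas: "\<And>x. x \<in> \<Omega> \<Longrightarrow> m x \<in> borel_measurable L" using m_meas by simp
  have cont: "\<And>y. y \<in> \<Omega> - N \<Longrightarrow> continuous_on \<Omega> (\<lambda>x. m x y)" using N(1) by auto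
  obtain F where F_meas: "F \<in> borel_measurable (L \<Otimes>\<^sub>M L)"
    and F_eq: "\<And>x y. x \<in> \<Omega> \<Longrightarrow> y \<in> \<Omega> - N \<Longrightarrow> F (x, y) = m x y"
    using caratheodory_jointly_measurable[OF meas cont] by blast
  define G where "G z = indicator (\<Omega> - N) (fst z) * indicator (\<Omega> - N) (snd z) * F z" for z :: "'n \<times> 'n"
  have "\<Omega> - N \<in> sets L" using N(3) sets.compl_sets[of N L] by auto
  show ?thesis
  proof
    show "G \<in> borel_measurable (L \<Otimes>\<^sub>M L)"
      unfolding G_def using \<open>\<Omega> - N \<in> sets L\<close> F_meas by measurable
    show "G (x, y) = G (y, x)" for x y
    proof (cases "x \<in> \<Omega> - N \<and> y \<in> \<Omega> - N")
      case True
      then show ?thesis unfolding G_def using F_eq m_sym by auto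
    qed (auto simp: G_def)
    show "0 \<le> G (x, y)" for x y
      unfolding G_def using F_eq m_nonneg by (auto simp: indicator_def)
    show "G (x, y) = m x y" if "x \<in> \<Omega> - N" "y \<in> \<Omega> - N" for x y
      unfolding G_def using F_eq that by (auto simp: indicator_def)
    show "G (x, y) = 0" if "x \<notin> \<Omega> - N" for x y
      unfolding G_def using that by (auto simp: indicator_def)
  qed (rule null_setsI[OF N(2,3)])
qed

end

section \<open>The symmetric kernel operator\<close>

text \<open>The kernel \<open>m\<close> is only separately measurable and continuous; Fubini needs a jointly measurable
  symmetric \<open>G\<close> that agrees with \<open>m\<close> off the null set \<open>N\<close>.  \<open>H\<close> bounds the row integrals of \<open>m\<close>.\<close>
locale symmetric_kernel = bounded_open_domain \<Omega> for \<Omega> :: "'n::euclidean_space set" +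
  fixes m :: "'n \<Rightarrow> 'n \<Rightarrow> real" and G :: "'n \<times> 'n \<Rightarrow> real" and N :: "'n set" and H :: real
  assumes kernel_measurable [measurable]: "G \<in> borel_measurable (lebesgue_on \<Omega> \<Otimes>\<^sub>M lebesgue_on \<Omega>)"
    and exceptional_null: "N \<in> null_sets (lebesgue_on \<Omega>)"
    and kernel_sym: "\<And>x y. G (x, y) = G (y, x)" and kernel_nonneg: "\<And>x y. 0 \<le> G (x, y)"
    and kernel_eq: "\<And>x y. x \<in> \<Omega> - N \<Longrightarrow> y \<in> \<Omega> - N \<Longrightarrow> G (x, y) = m x y"
    and kernel_exceptional: "\<And>x y. x \<notin> \<Omega> - N \<Longrightarrow> G (x, y) = 0"
    and m_measurable: "\<And>x. x \<in> \<Omega> \<Longrightarrow> m x \<in> borel_measurable (lebesgue_on \<Omega>)"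
    and m_bound: "\<And>x. x \<in> \<Omega> \<Longrightarrow> (\<integral>\<^sup>+y. ennreal (m x y) \<partial>lebesgue_on \<Omega>) \<le> ennreal H"
    and H_nonneg: "0 \<le> H"
begin

definition kernel_mass :: "'n \<Rightarrow> real" where
  "kernel_mass x = (\<integral>y. G (x, y) \<partial>L)"

definition kernel_op :: "('n \<Rightarrow> real) \<Rightarrow> 'n \<Rightarrow> real" where
  "kernel_op f x = (\<integral>y. G (x, y) * f y \<partial>L)"

lemma measurable_kernel_section [measurable]: "(\<lambda>y. G (x, y)) \<in> borel_measurable L"
proof (cases "x \<in> \<Omega>")
  case True
  then show ?thesis using measurable_Pair2[OF kernel_measurable, of x] by simp
next
  case False
  then show ?thesis using kernel_exceptional by simp
qed

lemma AE_not_exceptional: "AE x in L. x \<in> \<Omega> - N"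
  using AE_not_in[OF exceptional_null] AE_space by eventually_elim simp

lemma nn_integral_kernel_section_le: "(\<integral>\<^sup>+y. ennreal (G (x, y)) \<partial>L) \<le> ennreal H"
proof (cases "x \<in> \<Omega> - N")
  case True
  from AE_not_exceptional have "AE y in L. G (x, y) = m x y"
    by (rule eventually_mono) (use kernel_eq True in auto)
  then have "(\<integral>\<^sup>+y. ennreal (G (x, y)) \<partial>L) = (\<integral>\<^sup>+y. ennreal (m x y) \<partial>L)"
    by (intro nn_integral_cong_AE) (auto elim!: eventually_mono)
  also have "\<dots> \<le> ennreal H" using m_bound True by auto
  finally show ?thesis .
next
  case False
  then show ?thesis using kernel_exceptional by simp
qed

lemma integrable_kernel_section: "integrable L (\<lambda>y. G (x, y))"
  using le_less_trans[OF nn_integral_kernel_section_le ennreal_less_top] kernel_nonneg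
  by (intro integrableI_nonneg) auto

lemma kernel_mass_nonneg: "0 \<le> kernel_mass x"
  unfolding kernel_mass_def using kernel_nonneg by simp

lemma kernel_mass_le: "kernel_mass x \<le> H"
proof -
  have "ennreal (kernel_mass x) = (\<integral>\<^sup>+y. ennreal (G (x, y)) \<partial>L)"
    unfolding kernel_mass_def
    by (rule nn_integral_eq_integral[symmetric]) (use integrable_kernel_section kernel_nonneg in auto)
  also have "\<dots> \<le> ennreal H" by (rule nn_integral_kernel_section_le)
  finally show ?thesis using H_nonneg by simp
qed

lemma integrable_kernel_mult:
  assumes "ess_bdd f"
  shows "integrable L (\<lambda>y. G (x, y) * f y)"
proof -
  obtain B where "0 \<le> B" and B: "AE y in L. \<bar>f y\<bar> \<le> B" using ess_bdd_nonneg_bound[OF assms] .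
  have [measurable]: "f \<in> borel_measurable L" using assms by (simp add: ess_bdd_def)
  have bound: "AE y in L. norm (G (x, y) * f y) \<le> norm (B * G (x, y))"
    using B by eventually_elim (use kernel_nonneg \<open>0 \<le> B\<close> in \<open>auto simp: abs_mult mult.commute
        intro!: mult_right_mono\<close>)
  have "integrable L (\<lambda>y. B * G (x, y))" using integrable_kernel_section by simp
  then show ?thesis by (rule Bochner_Integration.integrable_bound[OF _ _ bound]) measurable
qed

lemma kernel_op_measurable:
  assumes [measurable]: "f \<in> borel_measurable L"
  shows "kernel_op f \<in> borel_measurable L"
  unfolding kernel_op_def by (rule L.borel_measurable_lebesgue_integral) measurable

lemma ess_bdd_kernel_op:
  assumes "ess_bdd f"
  shows "ess_bdd (kernel_op f)"
proof -
  obtain B where "0 \<le> B" and B: "AE y in L. \<bar>f y\<bar> \<le> B" using ess_bdd_nonneg_bound[OF assms] .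
  have "\<bar>kernel_op f x\<bar> \<le> B * H" for x
  proof -
    have "\<bar>kernel_op f x\<bar> \<le> (\<integral>y. \<bar>G (x, y) * f y\<bar> \<partial>L)"
      unfolding kernel_op_def by (rule integral_abs_bound)
    also have "\<dots> \<le> (\<integral>y. B * G (x, y) \<partial>L)"
      using B integrable_abs[OF integrable_kernel_mult[OF assms]] integrable_kernel_section
      by (intro integral_mono_AE) (auto elim!: eventually_mono simp: abs_mult kernel_nonneg mult.commute
          intro!: mult_right_mono)
    also have "\<dots> \<le> B * H" using kernel_mass_le[of x] \<open>0 \<le> B\<close>
      unfolding kernel_mass_def by (simp add: mult_left_mono)
    finally show ?thesis .
  qed
  then show ?thesis
    using kernel_op_measurable assms unfolding ess_bdd_def by auto
qed

lemma ess_bdd_kernel_mass: "ess_bdd kernel_mass"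
proof -
  have "kernel_mass \<in> borel_measurable L"
    unfolding kernel_mass_def by (rule L.borel_measurable_lebesgue_integral) measurable
  then show ?thesis
    unfolding ess_bdd_def using kernel_mass_nonneg kernel_mass_le by (intro conjI exI[of _ H]) auto
qed

lemma kernel_op_AE_cong:
  "f \<in> borel_measurable L \<Longrightarrow> g \<in> borel_measurable L \<Longrightarrow> AE y in L. f y = g y \<Longrightarrow>
    kernel_op f x = kernel_op g x"
  unfolding kernel_op_def by (intro integral_cong_AE) (auto elim!: eventually_mono)

lemma kernel_op_const_one: "kernel_op (\<lambda>x. 1) = kernel_mass"
  unfolding kernel_op_def kernel_mass_def by (simp add: fun_eq_iff)

lemma nonlocal_op_eq_kernel_op:
  assumes x: "x \<in> \<Omega> - N" and f: "ess_bdd f"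
  shows "nonlocal_op \<Omega> m f x = kernel_op f x - f x * kernel_mass x"
proof -
  have "AE y in L. m x y * (f y - f x) = G (x, y) * f y - f x * G (x, y)"
    using AE_not_exceptional by (rule eventually_mono) (use kernel_eq x in \<open>auto simp: algebra_simps\<close>)
  then have "nonlocal_op \<Omega> m f x = (\<integral>y. G (x, y) * f y - f x * G (x, y) \<partial>L)"
    unfolding nonlocal_op_def set_integral_eq_integral_L
    using m_measurable[of x] x f by (intro integral_cong_AE) (auto simp: ess_bdd_def)
  also have "\<dots> = kernel_op f x - f x * kernel_mass x"
    unfolding kernel_op_def kernel_mass_def
    using integrable_kernel_mult[OF f] integrable_kernel_section by simp
  finally show ?thesis .
qed

lemma integrable_kernel: "integrable (L \<Otimes>\<^sub>M L) G"
proof (rule integrableI_nonneg)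
  show "AE z in L \<Otimes>\<^sub>M L. 0 \<le> G z" using kernel_nonneg by (auto intro!: AE_I2 simp: split_paired_all)
  have "(\<integral>\<^sup>+z. ennreal (G z) \<partial>(L \<Otimes>\<^sub>M L)) = (\<integral>\<^sup>+x. \<integral>\<^sup>+y. ennreal (G (x, y)) \<partial>L \<partial>L)"
    by (rule L.nn_integral_fst[symmetric]) measurable
  also have "\<dots> \<le> (\<integral>\<^sup>+x. ennreal H \<partial>L)" by (intro nn_integral_mono nn_integral_kernel_section_le)
  also have "\<dots> < \<infinity>" using L.emeasure_finite[of \<Omega>] by (simp add: ennreal_mult_eq_top_iff less_top[symmetric])
  finally show "(\<integral>\<^sup>+z. ennreal (G z) \<partial>(L \<Otimes>\<^sub>M L)) < \<infinity>" .
qed measurable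

lemma integrable_kernel_tensor:
  assumes f: "ess_bdd f" and g: "ess_bdd g"
  shows "integrable (L \<Otimes>\<^sub>M L) (\<lambda>z. g (fst z) * G z * f (snd z))"
proof -
  obtain Bf where "0 \<le> Bf" and Bf: "AE x in L. \<bar>f x\<bar> \<le> Bf" using ess_bdd_nonneg_bound[OF f] .
  obtain Bg where "0 \<le> Bg" and Bg: "AE x in L. \<bar>g x\<bar> \<le> Bg" using ess_bdd_nonneg_bound[OF g] .
  have [measurable]: "f \<in> borel_measurable L" "g \<in> borel_measurable L"
    using f g by (simp_all add: ess_bdd_def)
  have "AE z in L \<Otimes>\<^sub>M L. \<bar>g (fst z)\<bar> \<le> Bg \<and> \<bar>f (snd z)\<bar> \<le> Bf"
  proof (rule LL.AE_pair_measure)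
    show "{z \<in> space (L \<Otimes>\<^sub>M L). \<bar>g (fst z)\<bar> \<le> Bg \<and> \<bar>f (snd z)\<bar> \<le> Bf} \<in> sets (L \<Otimes>\<^sub>M L)"
      by measurable
    show "AE x in L. AE y in L. \<bar>g (fst (x, y))\<bar> \<le> Bg \<and> \<bar>f (snd (x, y))\<bar> \<le> Bf"
      using Bg by (rule eventually_mono) (use Bf in \<open>auto elim!: eventually_mono\<close>)
  qed
  then have bound: "AE z in L \<Otimes>\<^sub>M L. norm (g (fst z) * G z * f (snd z)) \<le> norm (Bg * Bf * G z)"
  proof (rule eventually_mono)
    fix z assume "\<bar>g (fst z)\<bar> \<le> Bg \<and> \<bar>f (snd z)\<bar> \<le> Bf"
    then have "\<bar>g (fst z)\<bar> * \<bar>f (snd z)\<bar> \<le> Bg * Bf" using \<open>0 \<le> Bg\<close> by (intro mult_mono) auto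
    moreover have "0 \<le> G z" using kernel_nonneg[of "fst z" "snd z"] by simp
    ultimately have "\<bar>g (fst z)\<bar> * \<bar>f (snd z)\<bar> * G z \<le> Bg * Bf * G z" by (rule mult_right_mono)
    then show "norm (g (fst z) * G z * f (snd z)) \<le> norm (Bg * Bf * G z)"
      using \<open>0 \<le> G z\<close> \<open>0 \<le> Bf\<close> \<open>0 \<le> Bg\<close> by (simp add: abs_mult ac_simps)
  qed
  have "integrable (L \<Otimes>\<^sub>M L) (\<lambda>z. Bg * Bf * G z)" using integrable_kernel by simp
  then show ?thesis by (rule Bochner_Integration.integrable_bound[OF _ _ bound]) measurable
qed

lemma integral_mult_kernel_op_eq:
  assumes f: "ess_bdd f" and g: "ess_bdd g"
  shows "(\<integral>x. g x * kernel_op f x \<partial>L) = (\<integral>z. g (fst z) * G z * f (snd z) \<partial>(L \<Otimes>\<^sub>M L))"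
proof -
  have "(\<integral>x. g x * kernel_op f x \<partial>L) = (\<integral>x. \<integral>y. g (fst (x, y)) * G (x, y) * f (snd (x, y)) \<partial>L \<partial>L)"
    unfolding kernel_op_def by (simp add: mult.assoc)
  also have "\<dots> = (\<integral>z. g (fst z) * G z * f (snd z) \<partial>(L \<Otimes>\<^sub>M L))"
    by (rule LL.integral_fst'[OF integrable_kernel_tensor[OF f g]])
  finally show ?thesis .
qed

lemma integral_mult_kernel_op_swap:
  assumes f: "ess_bdd f" and g: "ess_bdd g"
  shows "(\<integral>x. g x * kernel_op f x \<partial>L) = (\<integral>x. f x * kernel_op g x \<partial>L)"
proof -
  have [measurable]: "f \<in> borel_measurable L" "g \<in> borel_measurable L"
    using f g by (simp_all add: ess_bdd_def)
  have "(\<integral>z. g (fst z) * G z * f (snd z) \<partial>(L \<Otimes>\<^sub>M L))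
      = (\<integral>(x, y). g (fst (y, x)) * G (y, x) * f (snd (y, x)) \<partial>(L \<Otimes>\<^sub>M L))"
    by (rule LL.integral_product_swap[symmetric]) measurable
  also have "\<dots> = (\<integral>z. f (fst z) * G z * g (snd z) \<partial>(L \<Otimes>\<^sub>M L))"
  proof (rule Bochner_Integration.integral_cong)
    fix z :: "'n \<times> 'n"
    show "(case z of (x, y) \<Rightarrow> g (fst (y, x)) * G (y, x) * f (snd (y, x))) = f (fst z) * G z * g (snd z)"
      using kernel_sym[of "snd z" "fst z"] by (cases z) (simp add: ac_simps)
  qed simp
  finally show ?thesis unfolding integral_mult_kernel_op_eq[OF f g] integral_mult_kernel_op_eq[OF g f] .
qed

end

lemma (in bounded_open_domain) symmetric_kernel_exists:
  fixes m :: "'n \<Rightarrow> 'n \<Rightarrow> real"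
  assumes m_nonneg: "\<forall>x\<in>\<Omega>. \<forall>y\<in>\<Omega>. 0 \<le> m x y"
    and m_sym: "\<forall>x\<in>\<Omega>. \<forall>y\<in>\<Omega>. m x y = m y x"
    and m_meas: "\<forall>x\<in>\<Omega>. (\<lambda>y. m x y) \<in> borel_measurable (lebesgue_on \<Omega>)"
    and m_unif: "AE y in lebesgue. y \<in> \<Omega> \<longrightarrow> uniformly_continuous_on \<Omega> (\<lambda>x. m x y)"
    and m_bound: "\<exists>B::real. \<forall>x\<in>\<Omega>. (\<integral>\<^sup>+ y. ennreal (m x y * indicator \<Omega> y) \<partial>lebesgue) \<le> ennreal B"
  obtains G N H where "symmetric_kernel \<Omega> m G N H"
proof -
  have "AE y in L. continuous_on \<Omega> (\<lambda>x. m x y)"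
    using m_unif unfolding AE_lebesgue_domain_iff by (auto elim!: eventually_mono uniformly_continuous_imp_continuous)
  then obtain G N where G: "G \<in> borel_measurable (L \<Otimes>\<^sub>M L)" "N \<in> null_sets L"
    "\<And>x y. G (x, y) = G (y, x)" "\<And>x y. 0 \<le> G (x, y)"
    "\<And>x y. x \<in> \<Omega> - N \<Longrightarrow> y \<in> \<Omega> - N \<Longrightarrow> G (x, y) = m x y" "\<And>x y. x \<notin> \<Omega> - N \<Longrightarrow> G (x, y) = 0"
    using symmetric_jointly_measurable_version[OF m_nonneg m_sym m_meas] by blast
  obtain B where B: "\<forall>x\<in>\<Omega>. (\<integral>\<^sup>+ y. ennreal (m x y * indicator \<Omega> y) \<partial>lebesgue) \<le> ennreal B"
    using m_bound by blast
  have "(\<integral>\<^sup>+y. ennreal (m x y) \<partial>L) \<le> ennreal (max B 0)" if "x \<in> \<Omega>" for x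
  proof -
    have "(\<integral>\<^sup>+y. ennreal (m x y) \<partial>L) = (\<integral>\<^sup>+y. ennreal (m x y) * indicator \<Omega> y \<partial>lebesgue)"
      by (rule nn_integral_restrict_space[OF domain_sets'])
    also have "\<dots> = (\<integral>\<^sup>+ y. ennreal (m x y * indicator \<Omega> y) \<partial>lebesgue)"
      by (intro nn_integral_cong) (simp split: split_indicator)
    also have "\<dots> \<le> ennreal (max B 0)" using B that by (auto intro: order_trans ennreal_leI)
    finally show ?thesis .
  qed
  with G m_meas have "symmetric_kernel \<Omega> m G N (max B 0)"
    by unfold_locales auto
  then show ?thesis ..
qed

subsection \<open>Picone's inequality\<close>

context symmetric_kernel
begin

context
  fixes f w c :: "'n \<Rightarrow> real"
  assumes bdd_f: "ess_bdd f" and bdd_w: "ess_bdd w" and w_pos: "\<And>x. x \<in> \<Omega> \<Longrightarrow> 0 < w x"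
    and bdd_c: "ess_bdd c" and w_eigen: "AE x in L. kernel_op w x = c x * w x"
begin

definition picone_density :: "'n \<times> 'n \<Rightarrow> real" where
  "picone_density z = G z * (f (fst z))\<^sup>2 * w (snd z) / w (fst z)"

lemma picone_density_nonneg: "z \<in> space (L \<Otimes>\<^sub>M L) \<Longrightarrow> 0 \<le> picone_density z"
  unfolding picone_density_def using kernel_nonneg[of "fst z" "snd z"] w_pos[of "fst z"] w_pos[of "snd z"]
  by (simp add: space_pair_measure mem_Times_iff)

lemma picone_density_Pair: "picone_density (x, y) = (f x)\<^sup>2 / w x * (G (x, y) * w y)"
  unfolding picone_density_def by (simp add: divide_inverse ac_simps)

lemma integrable_picone_density_section: "integrable L (\<lambda>y. picone_density (x, y))"
  unfolding picone_density_Pair using integrable_kernel_mult[OF bdd_w, of x] by simp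

lemma integral_picone_density_section:
  "(\<integral>y. picone_density (x, y) \<partial>L) = (f x)\<^sup>2 / w x * kernel_op w x"
  unfolding picone_density_Pair kernel_op_def by simp

lemma picone_density_section_AE: "AE x in L. (f x)\<^sup>2 / w x * kernel_op w x = (f x)\<^sup>2 * c x"
  using w_eigen AE_space
proof eventually_elim
  case (elim x)
  then have "0 < w x" using w_pos by simp
  with elim show ?case by (simp add: field_simps)
qed

lemma c_nonneg_AE: "AE x in L. 0 \<le> c x"
  using w_eigen AE_space
proof eventually_elim
  case (elim x)
  have "0 \<le> kernel_op w x"
    unfolding kernel_op_def using w_pos kernel_nonneg
    by (intro integral_nonneg_AE AE_I2) (force intro: mult_nonneg_nonneg less_imp_le)
  with elim w_pos[of x] show ?case by (simp add: zero_le_mult_iff)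
qed

lemma integrable_picone_density: "integrable (L \<Otimes>\<^sub>M L) picone_density"
proof (rule integrableI_nonneg)
  have [measurable]: "f \<in> borel_measurable L" "w \<in> borel_measurable L"
    using bdd_f bdd_w by (simp_all add: ess_bdd_def)
  show "picone_density \<in> borel_measurable (L \<Otimes>\<^sub>M L)" unfolding picone_density_def by measurable
  then have "(\<integral>\<^sup>+z. ennreal (picone_density z) \<partial>(L \<Otimes>\<^sub>M L))
      = (\<integral>\<^sup>+x. \<integral>\<^sup>+y. ennreal (picone_density (x, y)) \<partial>L \<partial>L)"
    by (intro L.nn_integral_fst[symmetric]) measurable
  also have "\<dots> = (\<integral>\<^sup>+x. ennreal ((f x)\<^sup>2 / w x * kernel_op w x) \<partial>L)"
  proof (rule nn_integral_cong)
    fix x assume "x \<in> space L"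
    from integrable_picone_density_section[of x] show "(\<integral>\<^sup>+y. ennreal (picone_density (x, y)) \<partial>L) = ennreal ((f x)\<^sup>2 / w x * kernel_op w x)"
      using \<open>x \<in> space L\<close> picone_density_nonneg
      by (subst nn_integral_eq_integral) (auto simp: space_pair_measure integral_picone_density_section)
  qed
  also have "\<dots> = (\<integral>\<^sup>+x. ennreal ((f x)\<^sup>2 * c x) \<partial>L)"
    using picone_density_section_AE by (intro nn_integral_cong_AE) (auto elim!: eventually_mono)
  also have "\<dots> = ennreal (\<integral>x. (f x)\<^sup>2 * c x \<partial>L)"
    using c_nonneg_AE ess_bdd_integrable[OF ess_bdd_mult[OF ess_bdd_mult[OF bdd_f bdd_f] bdd_c]]
    by (intro nn_integral_eq_integral) (auto simp: power2_eq_square elim!: eventually_mono)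
  finally show "(\<integral>\<^sup>+z. ennreal (picone_density z) \<partial>(L \<Otimes>\<^sub>M L)) < \<infinity>" by simp
  show "AE z in L \<Otimes>\<^sub>M L. 0 \<le> picone_density z" using picone_density_nonneg by (intro AE_I2)
qed

lemma integral_picone_density: "(\<integral>z. picone_density z \<partial>(L \<Otimes>\<^sub>M L)) = (\<integral>x. (f x)\<^sup>2 * c x \<partial>L)"
proof -
  have "(\<integral>z. picone_density z \<partial>(L \<Otimes>\<^sub>M L)) = (\<integral>x. (f x)\<^sup>2 / w x * kernel_op w x \<partial>L)"
    using LL.integral_fst'[OF integrable_picone_density] by (simp add: integral_picone_density_section)
  also have "\<dots> = (\<integral>x. (f x)\<^sup>2 * c x \<partial>L)"
  proof (rule integral_cong_AE)
    have [measurable]: "f \<in> borel_measurable L" "w \<in> borel_measurable L" "c \<in> borel_measurable L"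
      using bdd_f bdd_w bdd_c by (simp_all add: ess_bdd_def)
    have [measurable]: "kernel_op w \<in> borel_measurable L" by (rule kernel_op_measurable) measurable
    show "(\<lambda>x. (f x)\<^sup>2 / w x * kernel_op w x) \<in> borel_measurable L" by measurable
    show "(\<lambda>x. (f x)\<^sup>2 * c x) \<in> borel_measurable L" by measurable
  qed (rule picone_density_section_AE)
  finally show ?thesis .
qed

text \<open>The proof symmetrises the pointwise AM-GM bound
  \<open>f x f y \<le> (f x\<^sup>2 w y / w x + f y\<^sup>2 w x / w y) / 2\<close>.\<close>
lemma picone_inequality: "(\<integral>x. f x * kernel_op f x \<partial>L) \<le> (\<integral>x. (f x)\<^sup>2 * c x \<partial>L)"
proof -
  let ?swap = "\<lambda>(x, y). picone_density (y, x)"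
  have [measurable]: "f \<in> borel_measurable L" "w \<in> borel_measurable L"
    using bdd_f bdd_w by (simp_all add: ess_bdd_def)
  have swap_int: "integrable (L \<Otimes>\<^sub>M L) ?swap"
    by (rule LL.integrable_product_swap[OF integrable_picone_density])
  have "(\<integral>x. f x * kernel_op f x \<partial>L) = (\<integral>z. f (fst z) * G z * f (snd z) \<partial>(L \<Otimes>\<^sub>M L))"
    by (rule integral_mult_kernel_op_eq[OF bdd_f bdd_f])
  also have "\<dots> \<le> (\<integral>z. picone_density z / 2 + ?swap z / 2 \<partial>(L \<Otimes>\<^sub>M L))"
  proof (rule integral_mono)
    show "integrable (L \<Otimes>\<^sub>M L) (\<lambda>z. f (fst z) * G z * f (snd z))"
      by (rule integrable_kernel_tensor[OF bdd_f bdd_f])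
    show "integrable (L \<Otimes>\<^sub>M L) (\<lambda>z. picone_density z / 2 + ?swap z / 2)"
      using integrable_picone_density swap_int by auto
    fix z assume "z \<in> space (L \<Otimes>\<^sub>M L)"
    then obtain x y where z: "z = (x, y)" "x \<in> \<Omega>" "y \<in> \<Omega>" by (auto simp: space_pair_measure)
    have "G (x, y) * (f x * f y) \<le> G (x, y) * ((f x)\<^sup>2 * w y / w x / 2 + (f y)\<^sup>2 * w x / w y / 2)"
      using mult_le_weighted_squares[OF w_pos[OF z(2)] w_pos[OF z(3)]] kernel_nonneg
      by (rule mult_left_mono)
    then show "f (fst z) * G z * f (snd z) \<le> picone_density z / 2 + ?swap z / 2"
      unfolding z picone_density_def by (simp add: kernel_sym[of y x] algebra_simps)
  qed
  also have "\<dots> = (\<integral>z. picone_density z \<partial>(L \<Otimes>\<^sub>M L))"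
    using integrable_picone_density swap_int LL.integral_product_swap[of picone_density] by simp
  finally show ?thesis unfolding integral_picone_density .
qed

end

end

section \<open>Moments of a solution of the nonlocal logistic equation\<close>

locale logistic_solution = symmetric_kernel \<Omega> m G N H for \<Omega> :: "'n::euclidean_space set" and m G N H +
  fixes u u' :: "real \<Rightarrow> 'n \<Rightarrow> real" and a k ubar :: "'n \<Rightarrow> real" and a_min a_max c0 C0 :: real
  assumes u_X: "\<forall>t\<ge>0. in_L1_Linf \<Omega> (u t)" and u'_X: "\<forall>t>0. in_L1_Linf \<Omega> (u' t)"
    and u_deriv: "\<forall>t>0. ((\<lambda>h. X_norm \<Omega> (\<lambda>x. (u (t + h) x - u t x) / h - u' t x)) \<longlongrightarrow> 0) (at 0)"
    and u_cont0: "((\<lambda>s. X_norm \<Omega> (\<lambda>x. u s x - u 0 x)) \<longlongrightarrow> 0) (at_right 0)"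
    and u_nonneg: "\<forall>t\<ge>0. AE x in lebesgue. x \<in> \<Omega> \<longrightarrow> u t x \<ge> 0"
    and u0_nonzero: "\<not> (AE x in lebesgue. x \<in> \<Omega> \<longrightarrow> u 0 x = 0)"
    and u_eq: "\<forall>t>0. AE x in lebesgue. x \<in> \<Omega> \<longrightarrow>
        u' t x = nonlocal_op \<Omega> m (u t) x + (a x - (LINT y:\<Omega>|lebesgue. k y * u t y)) * u t x"
    and a_cont: "continuous_on \<Omega> a" and a_bounds: "\<And>x. x \<in> \<Omega> \<Longrightarrow> a_min \<le> a x \<and> a x \<le> a_max"
    and a_min_pos: "0 < a_min"
    and k_meas: "k \<in> borel_measurable lebesgue"
    and k_bounds: "\<And>x. x \<in> \<Omega> \<Longrightarrow> c0 \<le> k x \<and> k x \<le> C0" and c0_pos: "0 < c0"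
    and ubar_X: "in_L1_Linf \<Omega> ubar" and ubar_pos: "AE x in lebesgue. x \<in> \<Omega> \<longrightarrow> ubar x > 0"
    and ubar_eq: "AE x in lebesgue. x \<in> \<Omega> \<longrightarrow>
        nonlocal_op \<Omega> m ubar x + (a x - (LINT y:\<Omega>|lebesgue. k y * ubar y)) * ubar x = 0"
begin

definition mass :: "real \<Rightarrow> real" where "mass s = (\<integral>x. u s x \<partial>L)"
definition a_mass :: "real \<Rightarrow> real" where "a_mass s = (\<integral>x. a x * u s x \<partial>L)"
definition k_mass :: "real \<Rightarrow> real" where "k_mass s = (\<integral>x. k x * u s x \<partial>L)"
definition sq_norm :: "real \<Rightarrow> real" where "sq_norm s = (\<integral>x. u s x * u s x \<partial>L)"

text \<open>Picone's inequality needs a stationary solution that is positive everywhere, not just a.e.\<close>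
definition ubar_rep :: "'n \<Rightarrow> real" where "ubar_rep x = (if 0 < ubar x then ubar x else 1)"

definition weighted_mass :: "real \<Rightarrow> real" where "weighted_mass s = (\<integral>x. ubar_rep x * u s x \<partial>L)"

definition stationary_rate :: real where "stationary_rate = (\<integral>x. k x * ubar x \<partial>L)"

lemma ess_bdd_u: "0 \<le> s \<Longrightarrow> ess_bdd (u s)"
  using u_X by (simp add: in_L1_Linf_iff_ess_bdd)

lemma ess_bdd_u': "0 < s \<Longrightarrow> ess_bdd (u' s)"
  using u'_X by (simp add: in_L1_Linf_iff_ess_bdd)

lemma deriv_u: "0 < t \<Longrightarrow> ((\<lambda>h. X_norm \<Omega> (\<lambda>x. (u (t + h) x - u t x) / h - u' t x)) \<longlongrightarrow> 0) (at 0)"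
  using u_deriv by simp

lemma u_nonneg_AE: "0 \<le> s \<Longrightarrow> AE x in L. 0 \<le> u s x"
  using u_nonneg by (simp add: AE_lebesgue_domain_iff)

lemma u0_nonzero_AE: "\<not> (AE x in L. u 0 x = 0)"
  using u0_nonzero by (simp add: AE_lebesgue_domain_iff)

lemma u_eq_AE: "0 < t \<Longrightarrow> AE x in L. u' t x = nonlocal_op \<Omega> m (u t) x + (a x - k_mass t) * u t x"
  using u_eq by (simp add: AE_lebesgue_domain_iff set_integral_eq_integral_L k_mass_def)

lemma ess_bdd_a: "ess_bdd a"
  using continuous_imp_measurable_on_sets_lebesgue[OF a_cont domain_sets] a_bounds a_min_pos
  by (intro ess_bdd_if_bounded[of _ "\<bar>a_min\<bar> + \<bar>a_max\<bar>"]) force+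

lemma ess_bdd_k: "ess_bdd k"
  using measurable_restrict_space1[OF k_meas] k_bounds c0_pos
  by (intro ess_bdd_if_bounded[of _ "\<bar>c0\<bar> + \<bar>C0\<bar>"]) force+

lemma ess_bdd_ubar: "ess_bdd ubar"
  using ubar_X by (simp add: in_L1_Linf_iff_ess_bdd)

lemma ubar_pos_AE: "AE x in L. 0 < ubar x"
  using ubar_pos by (simp add: AE_lebesgue_domain_iff)

lemma ubar_eq_AE: "AE x in L. nonlocal_op \<Omega> m ubar x + (a x - stationary_rate) * ubar x = 0"
  using ubar_eq by (simp add: AE_lebesgue_domain_iff set_integral_eq_integral_L stationary_rate_def)

lemma ubar_rep_pos: "0 < ubar_rep x"
  unfolding ubar_rep_def by simp

lemma ubar_rep_AE_eq: "AE x in L. ubar x = ubar_rep x"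
  using ubar_pos_AE by (rule eventually_mono) (simp add: ubar_rep_def)

lemma ess_bdd_ubar_rep: "ess_bdd ubar_rep"
proof -
  have [measurable]: "ubar \<in> borel_measurable L" using ess_bdd_ubar by (simp add: ess_bdd_def)
  have "ubar_rep \<in> borel_measurable L" unfolding ubar_rep_def by measurable
  then show ?thesis using ess_bdd_AE_cong[OF ess_bdd_ubar _ ubar_rep_AE_eq] by simp
qed

lemma kernel_op_ubar_rep_AE:
  "AE x in L. kernel_op ubar_rep x = (stationary_rate + kernel_mass x - a x) * ubar_rep x"
  using ubar_eq_AE ubar_rep_AE_eq AE_not_exceptional
proof eventually_elim
  case (elim x)
  have "kernel_op ubar x = kernel_op ubar_rep x"
    using ess_bdd_ubar ess_bdd_ubar_rep ubar_rep_AE_eq by (intro kernel_op_AE_cong) (simp_all add: ess_bdd_def)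
  with elim nonlocal_op_eq_kernel_op[OF _ ess_bdd_ubar, of x] show ?case
    by (simp add: algebra_simps)
qed

lemma u'_eq_kernel_op_AE:
  assumes "0 < t"
  shows "AE x in L. u' t x = kernel_op (u t) x - u t x * kernel_mass x + (a x - k_mass t) * u t x"
  using u_eq_AE[OF assms] AE_not_exceptional
proof eventually_elim
  case (elim x)
  with nonlocal_op_eq_kernel_op[OF _ ess_bdd_u[of t]] assms show ?case by simp
qed

lemma integral_mult_u':
  assumes "0 < t" and g: "ess_bdd g"
  shows "(\<integral>x. g x * u' t x \<partial>L) = (\<integral>x. g x * kernel_op (u t) x \<partial>L) - (\<integral>x. g x * u t x * kernel_mass x \<partial>L)
     + (\<integral>x. g x * a x * u t x \<partial>L) - k_mass t * (\<integral>x. g x * u t x \<partial>L)"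
proof -
  have ut: "ess_bdd (u t)" using \<open>0 < t\<close> by (simp add: ess_bdd_u)
  have b: "ess_bdd (\<lambda>x. g x * kernel_op (u t) x)" "ess_bdd (\<lambda>x. g x * u t x * kernel_mass x)"
      "ess_bdd (\<lambda>x. g x * a x * u t x)" "ess_bdd (\<lambda>x. g x * u t x)"
    by (intro ess_bdd_mult g ut ess_bdd_a ess_bdd_kernel_op ess_bdd_kernel_mass)+
  have "(\<integral>x. g x * u' t x \<partial>L) = (\<integral>x. g x * kernel_op (u t) x - g x * u t x * kernel_mass x
      + g x * a x * u t x - k_mass t * (g x * u t x) \<partial>L)"
  proof (rule integral_cong_AE)
    show "(\<lambda>x. g x * u' t x) \<in> borel_measurable L"
      using ess_bdd_mult[OF g ess_bdd_u'[OF \<open>0 < t\<close>]] by (simp add: ess_bdd_def)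
    show "(\<lambda>x. g x * kernel_op (u t) x - g x * u t x * kernel_mass x + g x * a x * u t x
        - k_mass t * (g x * u t x)) \<in> borel_measurable L"
      using ess_bdd_diff[OF ess_bdd_add[OF ess_bdd_diff[OF b(1,2)] b(3)] ess_bdd_cmult[OF b(4)]]
      by (simp add: ess_bdd_def)
    show "AE x in L. g x * u' t x = g x * kernel_op (u t) x - g x * u t x * kernel_mass x
        + g x * a x * u t x - k_mass t * (g x * u t x)"
      using u'_eq_kernel_op_AE[OF \<open>0 < t\<close>]
    proof (rule eventually_mono)
      fix x assume e: "u' t x = kernel_op (u t) x - u t x * kernel_mass x + (a x - k_mass t) * u t x"
      show "g x * u' t x = g x * kernel_op (u t) x - g x * u t x * kernel_mass x
          + g x * a x * u t x - k_mass t * (g x * u t x)" unfolding e by (simp add: algebra_simps)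
    qed
  qed
  also have "\<dots> = (\<integral>x. g x * kernel_op (u t) x \<partial>L) - (\<integral>x. g x * u t x * kernel_mass x \<partial>L)
     + (\<integral>x. g x * a x * u t x \<partial>L) - k_mass t * (\<integral>x. g x * u t x \<partial>L)"
    using b[THEN ess_bdd_integrable] by simp
  finally show ?thesis .
qed

lemma has_real_derivative_integral_mult_u:
  "0 < t \<Longrightarrow> ess_bdd g \<Longrightarrow>
    ((\<lambda>s. \<integral>x. g x * u s x \<partial>L) has_real_derivative (\<integral>x. g x * u' t x \<partial>L)) (at t)"
  by (rule has_real_derivative_integral_mult[of u u' t]) (auto simp: ess_bdd_u ess_bdd_u' deriv_u)

lemma mass_has_derivative:
  assumes "0 < t"
  shows "(mass has_real_derivative a_mass t - k_mass t * mass t) (at t)"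
proof -
  have ut: "ess_bdd (u t)" using \<open>0 < t\<close> by (simp add: ess_bdd_u)
  have "(mass has_real_derivative (\<integral>x. 1 * u' t x \<partial>L)) (at t)"
    using has_real_derivative_integral_mult_u[OF \<open>0 < t\<close> ess_bdd_const[of 1]] by (simp add: mass_def[abs_def])
  moreover have "(\<integral>x. 1 * kernel_op (u t) x \<partial>L) = (\<integral>x. u t x * kernel_mass x \<partial>L)"
    using integral_mult_kernel_op_swap[OF ut ess_bdd_const[of 1]] by (simp add: kernel_op_const_one)
  ultimately show ?thesis
    using integral_mult_u'[OF \<open>0 < t\<close> ess_bdd_const[of 1]] by (simp add: a_mass_def mass_def)
qed

lemma integral_ubar_rep_mult_kernel_op:
  assumes "0 < t"
  shows "(\<integral>x. ubar_rep x * kernel_op (u t) x \<partial>L) = stationary_rate * weighted_mass t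
    + (\<integral>x. ubar_rep x * u t x * kernel_mass x \<partial>L) - (\<integral>x. ubar_rep x * a x * u t x \<partial>L)"
proof -
  have ut: "ess_bdd (u t)" using \<open>0 < t\<close> by (simp add: ess_bdd_u)
  have "(\<integral>x. ubar_rep x * kernel_op (u t) x \<partial>L) = (\<integral>x. stationary_rate * (ubar_rep x * u t x)
      + ubar_rep x * u t x * kernel_mass x - ubar_rep x * a x * u t x \<partial>L)"
    unfolding integral_mult_kernel_op_swap[OF ut ess_bdd_ubar_rep]
  proof (rule integral_cong_AE)
    show "(\<lambda>x. u t x * kernel_op ubar_rep x) \<in> borel_measurable L"
      using ess_bdd_mult[OF ut ess_bdd_kernel_op[OF ess_bdd_ubar_rep]] by (simp add: ess_bdd_def)
    show "(\<lambda>x. stationary_rate * (ubar_rep x * u t x) + ubar_rep x * u t x * kernel_mass x - ubar_rep x * a x * u t x)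
        \<in> borel_measurable L"
      using ut ess_bdd_ubar_rep ess_bdd_a ess_bdd_kernel_mass by (auto simp: ess_bdd_def)
    show "AE x in L. u t x * kernel_op ubar_rep x
        = stationary_rate * (ubar_rep x * u t x) + ubar_rep x * u t x * kernel_mass x - ubar_rep x * a x * u t x"
      using kernel_op_ubar_rep_AE
    proof (rule eventually_mono)
      fix x assume e: "kernel_op ubar_rep x = (stationary_rate + kernel_mass x - a x) * ubar_rep x"
      show "u t x * kernel_op ubar_rep x = stationary_rate * (ubar_rep x * u t x)
          + ubar_rep x * u t x * kernel_mass x - ubar_rep x * a x * u t x"
        unfolding e by (simp add: algebra_simps)
    qed
  qed
  also have "\<dots> = stationary_rate * weighted_mass t
    + (\<integral>x. ubar_rep x * u t x * kernel_mass x \<partial>L) - (\<integral>x. ubar_rep x * a x * u t x \<partial>L)"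
  proof -
    have "integrable L (\<lambda>x. ubar_rep x * u t x)" "integrable L (\<lambda>x. ubar_rep x * u t x * kernel_mass x)"
        "integrable L (\<lambda>x. ubar_rep x * a x * u t x)"
      by (intro ess_bdd_integrable ess_bdd_mult ess_bdd_ubar_rep ut ess_bdd_a ess_bdd_kernel_mass)+
    then show ?thesis by (simp add: weighted_mass_def integral_add integral_diff)
  qed
  finally show ?thesis .
qed

lemma weighted_mass_has_derivative:
  assumes "0 < t"
  shows "(weighted_mass has_real_derivative (stationary_rate - k_mass t) * weighted_mass t) (at t)"
proof -
  have "(\<integral>x. ubar_rep x * u' t x \<partial>L) = (stationary_rate - k_mass t) * weighted_mass t"
    unfolding integral_mult_u'[OF \<open>0 < t\<close> ess_bdd_ubar_rep] integral_ubar_rep_mult_kernel_op[OF \<open>0 < t\<close>]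
    by (simp add: weighted_mass_def algebra_simps)
  with has_real_derivative_integral_mult_u[OF \<open>0 < t\<close> ess_bdd_ubar_rep] show ?thesis
    by (simp add: weighted_mass_def[abs_def])
qed

lemma sq_norm_has_derivative:
  "0 < t \<Longrightarrow> (sq_norm has_real_derivative 2 * (\<integral>x. u t x * u' t x \<partial>L)) (at t)"
  unfolding sq_norm_def
  by (rule has_real_derivative_integral_square[of u u' t]) (auto simp: ess_bdd_u ess_bdd_u' deriv_u)

text \<open>Picone's inequality, with the stationary solution as eigenfunction, turns the equation into a
  differential inequality for the \<open>L\<^sup>2\<close> norm.\<close>
lemma integral_mult_u'_le:
  assumes "0 < t"
  shows "(\<integral>x. u t x * u' t x \<partial>L) \<le> (stationary_rate - k_mass t) * sq_norm t"
proof -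
  have ut: "ess_bdd (u t)" using \<open>0 < t\<close> by (simp add: ess_bdd_u)
  have c: "ess_bdd (\<lambda>x. stationary_rate + kernel_mass x - a x)"
    by (intro ess_bdd_diff ess_bdd_add ess_bdd_const ess_bdd_kernel_mass ess_bdd_a)
  have "(\<integral>x. u t x * kernel_op (u t) x \<partial>L)
      \<le> (\<integral>x. (u t x)\<^sup>2 * (stationary_rate + kernel_mass x - a x) \<partial>L)"
    by (rule picone_inequality[OF ut ess_bdd_ubar_rep ubar_rep_pos c]) (use kernel_op_ubar_rep_AE in simp)
  also have "\<dots> = stationary_rate * sq_norm t + (\<integral>x. u t x * u t x * kernel_mass x \<partial>L)
      - (\<integral>x. u t x * a x * u t x \<partial>L)"
  proof -
    have "integrable L (\<lambda>x. u t x * u t x)" "integrable L (\<lambda>x. u t x * u t x * kernel_mass x)"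
        "integrable L (\<lambda>x. u t x * a x * u t x)"
      by (intro ess_bdd_integrable ess_bdd_mult ut ess_bdd_a ess_bdd_kernel_mass)+
    moreover have "(\<lambda>x. (u t x)\<^sup>2 * (stationary_rate + kernel_mass x - a x))
        = (\<lambda>x. stationary_rate * (u t x * u t x) + u t x * u t x * kernel_mass x - u t x * a x * u t x)"
      by (simp add: fun_eq_iff algebra_simps power2_eq_square)
    ultimately show ?thesis by (simp add: sq_norm_def integral_add integral_diff)
  qed
  finally show ?thesis
    using integral_mult_u'[OF \<open>0 < t\<close> ut] by (simp add: sq_norm_def algebra_simps)
qed

lemma integral_mult_u_bounds:
  assumes "0 \<le> s" and g: "ess_bdd g" and bounds: "AE x in L. lo \<le> g x \<and> g x \<le> hi"
  shows "lo * mass s \<le> (\<integral>x. g x * u s x \<partial>L)" and "(\<integral>x. g x * u s x \<partial>L) \<le> hi * mass s"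
proof -
  have ints: "integrable L (u s)" "integrable L (\<lambda>x. g x * u s x)"
    using ess_bdd_u[OF \<open>0 \<le> s\<close>] g by (auto intro: ess_bdd_integrable ess_bdd_mult)
  have AE: "AE x in L. lo * u s x \<le> g x * u s x \<and> g x * u s x \<le> hi * u s x"
    using u_nonneg_AE[OF \<open>0 \<le> s\<close>] bounds by eventually_elim (auto intro: mult_right_mono)
  have "lo * mass s = (\<integral>x. lo * u s x \<partial>L)" unfolding mass_def by simp
  also have "\<dots> \<le> (\<integral>x. g x * u s x \<partial>L)" using ints AE by (intro integral_mono_AE) (auto elim!: eventually_mono)
  finally show "lo * mass s \<le> (\<integral>x. g x * u s x \<partial>L)" .
  have "(\<integral>x. g x * u s x \<partial>L) \<le> (\<integral>x. hi * u s x \<partial>L)"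
    using ints AE by (intro integral_mono_AE) (auto elim!: eventually_mono)
  also have "\<dots> = hi * mass s" unfolding mass_def by simp
  finally show "(\<integral>x. g x * u s x \<partial>L) \<le> hi * mass s" .
qed

lemma k_mass_bounds:
  assumes "0 \<le> s"
  shows "c0 * mass s \<le> k_mass s \<and> k_mass s \<le> C0 * mass s"
proof -
  have "AE x in L. c0 \<le> k x \<and> k x \<le> C0" using k_bounds by (intro AE_I2) simp
  from integral_mult_u_bounds[OF assms ess_bdd_k this] show ?thesis by (simp add: k_mass_def)
qed

lemma a_mass_bounds:
  assumes "0 \<le> s"
  shows "a_min * mass s \<le> a_mass s \<and> a_mass s \<le> a_max * mass s"
proof -
  have "AE x in L. a_min \<le> a x \<and> a x \<le> a_max" using a_bounds by (intro AE_I2) simp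
  from integral_mult_u_bounds[OF assms ess_bdd_a this] show ?thesis by (simp add: a_mass_def)
qed

lemma a_max_pos: "0 < a_max"
  using domain_nonempty a_bounds a_min_pos by fastforce

lemma c0_le_C0: "c0 \<le> C0"
  using domain_nonempty k_bounds by fastforce

lemma mass_nonneg: "0 \<le> s \<Longrightarrow> 0 \<le> mass s"
  unfolding mass_def using u_nonneg_AE by (intro integral_nonneg_AE) auto

lemma weighted_mass_nonneg:
  assumes "0 \<le> s"
  shows "0 \<le> weighted_mass s"
  unfolding weighted_mass_def using u_nonneg_AE[OF assms]
  by (intro integral_nonneg_AE) (auto elim!: eventually_mono simp: ubar_rep_pos less_imp_le)

lemma stationary_rate_nonneg: "0 \<le> stationary_rate"
  unfolding stationary_rate_def
proof (intro integral_nonneg_AE)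
  show "AE x in L. 0 \<le> k x * ubar x"
    using ubar_pos_AE AE_space
  proof eventually_elim
    case (elim x)
    with k_bounds[of x] c0_pos show ?case by simp
  qed
qed

lemma integral_u0_pos:
  assumes g: "ess_bdd g" and g_pos: "\<And>x. x \<in> \<Omega> \<Longrightarrow> 0 < g x"
  shows "0 < (\<integral>x. g x * u 0 x \<partial>L)"
proof -
  have nonneg: "AE x in L. 0 \<le> g x * u 0 x"
    using u_nonneg_AE[OF order_refl] AE_space
  proof eventually_elim
    case (elim x)
    with g_pos[of x] show ?case by simp
  qed
  have "(\<integral>x. g x * u 0 x \<partial>L) \<noteq> 0"
  proof
    assume "(\<integral>x. g x * u 0 x \<partial>L) = 0"
    then have "AE x in L. g x * u 0 x = 0"
      using integral_nonneg_eq_0_iff_AE[OF ess_bdd_integrable[OF ess_bdd_mult[OF g ess_bdd_u[of 0]]] nonneg]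
      by simp
    with AE_space have "AE x in L. u 0 x = 0" by eventually_elim (use g_pos in fastforce)
    with u0_nonzero_AE show False ..
  qed
  moreover have "0 \<le> (\<integral>x. g x * u 0 x \<partial>L)" using nonneg by (rule integral_nonneg_AE)
  ultimately show ?thesis by simp
qed

lemma mass_0_pos: "0 < mass 0"
  using integral_u0_pos[OF ess_bdd_const[of 1]] by (simp add: mass_def)

lemma weighted_mass_0_pos: "0 < weighted_mass 0"
  using integral_u0_pos[OF ess_bdd_ubar_rep ubar_rep_pos] by (simp add: weighted_mass_def)

lemma mass_tendsto_0: "(mass \<longlongrightarrow> mass 0) (at_right 0)"
  using tendsto_integral_mult_at_right_0[OF ess_bdd_u u_cont0 ess_bdd_const[of 1]]
  by (simp add: mass_def[abs_def])

lemma weighted_mass_tendsto_0: "(weighted_mass \<longlongrightarrow> weighted_mass 0) (at_right 0)"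
  using tendsto_integral_mult_at_right_0[OF ess_bdd_u u_cont0 ess_bdd_ubar_rep]
  by (simp add: weighted_mass_def[abs_def])

lemma sq_norm_tendsto_0: "(sq_norm \<longlongrightarrow> sq_norm 0) (at_right 0)"
  using tendsto_integral_square_at_right_0[OF ess_bdd_u u_cont0] by (simp add: sq_norm_def[abs_def])

lemma mass_pos:
  assumes "0 \<le> t"
  shows "0 < mass t"
proof -
  have "continuous_on {0..t} mass"
    by (rule continuous_on_Icc_0_if_DERIV[OF mass_tendsto_0 mass_has_derivative]) simp
  then obtain M where M: "\<And>s. s \<in> {0..t} \<Longrightarrow> mass s \<le> M"
    using continuous_attains_sup[OF compact_Icc] assms by (metis atLeastAtMost_iff empty_iff)
  show ?thesis
  proof (rule DERIV_ge_linear_imp_pos[OF assms mass_0_pos mass_tendsto_0 mass_has_derivative])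
    fix s assume s: "0 < s" "s < t"
    then have "k_mass s * mass s \<le> (C0 * M) * mass s"
      using k_mass_bounds[of s] M[of s] mass_nonneg[of s] c0_pos c0_le_C0
      by (intro mult_right_mono) (auto intro: order_trans mult_left_mono)
    moreover have "0 \<le> a_mass s"
      using a_mass_bounds[of s] mass_nonneg[of s] a_min_pos s by (auto intro: order_trans[rotated])
    ultimately show "- (C0 * M) * mass s \<le> a_mass s - k_mass s * mass s" by simp
  qed simp
qed

lemma mass_upper_bound: "0 \<le> t \<Longrightarrow> mass t \<le> max (mass 0) (a_max / c0)"
proof (rule logistic_upper_bound[OF _ a_max_pos c0_pos mass_pos mass_tendsto_0 mass_has_derivative])
  fix s :: real assume "0 < s"
  have "c0 * mass s * mass s \<le> k_mass s * mass s"
    using k_mass_bounds[of s] mass_pos[of s] \<open>0 < s\<close> by (intro mult_right_mono) auto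
  with a_mass_bounds[of s] \<open>0 < s\<close>
  show "a_mass s - k_mass s * mass s \<le> a_max * mass s - c0 * (mass s)\<^sup>2"
    by (simp add: power2_eq_square)
qed

lemma mass_lower_bound: "0 \<le> t \<Longrightarrow> min (mass 0) (a_min / C0) \<le> mass t"
proof (rule logistic_lower_bound[OF _ a_min_pos _ mass_pos mass_tendsto_0 mass_has_derivative])
  show "0 < C0" using c0_pos c0_le_C0 by simp
  fix s :: real assume "0 < s"
  have "k_mass s * mass s \<le> C0 * mass s * mass s"
    using k_mass_bounds[of s] mass_pos[of s] \<open>0 < s\<close> by (intro mult_right_mono) auto
  with a_mass_bounds[of s] \<open>0 < s\<close>
  show "a_min * mass s - C0 * (mass s)\<^sup>2 \<le> a_mass s - k_mass s * mass s"
    by (simp add: power2_eq_square)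
qed

lemma weighted_mass_pos:
  assumes "0 \<le> t"
  shows "0 < weighted_mass t"
proof (rule DERIV_ge_linear_imp_pos[OF assms weighted_mass_0_pos weighted_mass_tendsto_0
      weighted_mass_has_derivative])
  fix s assume s: "0 < s" "s < t"
  have "k_mass s \<le> C0 * max (mass 0) (a_max / c0)"
    using k_mass_bounds[of s] mass_upper_bound[of s] s c0_pos c0_le_C0
    by (auto intro: order_trans mult_left_mono)
  then have "- (C0 * max (mass 0) (a_max / c0)) \<le> stationary_rate - k_mass s"
    using stationary_rate_nonneg by linarith
  then show "- (C0 * max (mass 0) (a_max / c0)) * weighted_mass s
      \<le> (stationary_rate - k_mass s) * weighted_mass s"
    using weighted_mass_nonneg[of s] s by (intro mult_right_mono) auto
qed simp

lemma sq_norm_ratio_le: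
  assumes "0 \<le> t"
  shows "sq_norm t / (weighted_mass t)\<^sup>2 \<le> sq_norm 0 / (weighted_mass 0)\<^sup>2"
proof (rule ratio_square_nonincreasing[OF assms weighted_mass_pos weighted_mass_tendsto_0 sq_norm_tendsto_0
      weighted_mass_has_derivative sq_norm_has_derivative])
  fix s :: real assume "0 < s"
  from integral_mult_u'_le[OF this]
  show "2 * (\<integral>x. u s x * u' s x \<partial>L) \<le> 2 * (stationary_rate - k_mass s) * sq_norm s" by linarith
qed

lemma L2_norm_u: "L2_norm \<Omega> (u t) = sqrt (sq_norm t)"
  unfolding L2_norm_def sq_norm_def set_integral_eq_integral_L by (simp add: power2_eq_square)

lemma sq_norm_lower_bound:
  assumes "0 \<le> t"
  shows "(min (mass 0) (a_min / C0))\<^sup>2 / measure L \<Omega> \<le> sq_norm t"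
proof -
  have "0 < min (mass 0) (a_min / C0)" using mass_0_pos a_min_pos c0_pos c0_le_C0 by simp
  then have "(min (mass 0) (a_min / C0))\<^sup>2 / measure L \<Omega> \<le> (mass t)\<^sup>2 / measure L \<Omega>"
    using mass_lower_bound[OF assms] measure_domain_pos by (intro divide_right_mono power_mono) auto
  also have "\<dots> \<le> sq_norm t"
    using square_integral_le_integral_square[OF ess_bdd_u[OF assms]] by (simp add: mass_def sq_norm_def)
  finally show ?thesis .
qed

lemma sq_norm_upper_bound: obtains C where "\<And>t. 0 \<le> t \<Longrightarrow> sq_norm t \<le> C"
proof -
  obtain B where "0 \<le> B" and B: "AE x in L. \<bar>ubar_rep x\<bar> \<le> B"
    using ess_bdd_nonneg_bound[OF ess_bdd_ubar_rep] .
  have "AE x in L. 0 \<le> ubar_rep x \<and> ubar_rep x \<le> B"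
    using B by (rule eventually_mono) (simp add: ubar_rep_pos less_imp_le)
  define R where "R = sq_norm 0 / (weighted_mass 0)\<^sup>2"
  have "sq_norm t \<le> R * (B * max (mass 0) (a_max / c0))\<^sup>2" if "0 \<le> t" for t
  proof -
    from integral_mult_u_bounds(2)[OF that ess_bdd_ubar_rep \<open>AE x in L. 0 \<le> ubar_rep x \<and> ubar_rep x \<le> B\<close>]
    have "weighted_mass t \<le> B * mass t" by (simp add: weighted_mass_def)
    also have "\<dots> \<le> B * max (mass 0) (a_max / c0)"
      using mass_upper_bound[OF that] \<open>0 \<le> B\<close> by (simp add: mult_left_mono)
    finally have "(weighted_mass t)\<^sup>2 \<le> (B * max (mass 0) (a_max / c0))\<^sup>2"
      using weighted_mass_pos[OF that] by (intro power_mono) auto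
    moreover have "sq_norm t \<le> R * (weighted_mass t)\<^sup>2"
      using sq_norm_ratio_le[OF that] weighted_mass_pos[OF that] unfolding R_def
      by (simp add: divide_le_eq)
    moreover have "0 \<le> R" unfolding R_def sq_norm_def by simp
    ultimately show ?thesis by (meson mult_left_mono order_trans)
  qed
  then show ?thesis by (rule that)
qed

theorem L2_norm_bounds:
  "\<exists>c2 C2. 0 < c2 \<and> c2 < C2 \<and> (\<forall>t>0. c2 \<le> L2_norm \<Omega> (u t) \<and> L2_norm \<Omega> (u t) < C2)"
proof -
  obtain C where C: "\<And>t. 0 \<le> t \<Longrightarrow> sq_norm t \<le> C" using sq_norm_upper_bound by blast
  define c2 where "c2 = sqrt ((min (mass 0) (a_min / C0))\<^sup>2 / measure L \<Omega>)"
  have "0 < min (mass 0) (a_min / C0)" using mass_0_pos a_min_pos c0_pos c0_le_C0 by simp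
  then have "0 < c2"
    unfolding c2_def using measure_domain_pos by (intro real_sqrt_gt_zero divide_pos_pos zero_less_power)
  moreover have "c2 \<le> L2_norm \<Omega> (u t)" if "0 < t" for t
    using sq_norm_lower_bound[of t] that unfolding L2_norm_u c2_def by simp
  moreover have "L2_norm \<Omega> (u t) < sqrt C + c2 + 1" if "0 < t" for t
    using C[of t] that \<open>0 < c2\<close> unfolding L2_norm_u by (smt (verit) real_sqrt_le_mono)
  ultimately show ?thesis by (intro exI[of _ c2] exI[of _ "sqrt C + c2 + 1"]) fastforce
qed

end

lemma continuous_on_compact_pos_bounds:
  fixes f :: "'a::topological_space \<Rightarrow> real"
  assumes "compact K" "K \<noteq> {}" "continuous_on K f" "\<forall>x\<in>K. 0 < f x"
  obtains lo hi where "0 < lo" "\<And>x. x \<in> K \<Longrightarrow> lo \<le> f x \<and> f x \<le> hi"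
proof -
  obtain x\<^sub>0 where "x\<^sub>0 \<in> K" "\<forall>y\<in>K. f x\<^sub>0 \<le> f y"
    using continuous_attains_inf[OF assms(1-3)] by blast
  moreover obtain x\<^sub>1 where "\<forall>y\<in>K. f y \<le> f x\<^sub>1"
    using continuous_attains_sup[OF assms(1-3)] by blast
  ultimately show ?thesis using assms(4) that[of "f x\<^sub>0" "f x\<^sub>1"] by blast
qed

theorem lemma4p2:
  fixes \<Omega> :: "'n::euclidean_space set"
    and a :: "'n \<Rightarrow> real" and m :: "'n \<Rightarrow> 'n \<Rightarrow> real" and k :: "'n \<Rightarrow> real"
    and c0 C0 :: real
    and ubar u0 :: "'n \<Rightarrow> real"
    and u u' :: "real \<Rightarrow> 'n \<Rightarrow> real"
  assumes \<Omega>_open: "open \<Omega>" and \<Omega>_bounded: "bounded \<Omega>" and \<Omega>_conn: "connected \<Omega>"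
    and \<Omega>_lip: "lipschitz_boundary \<Omega>"
    and a_cont: "continuous_on (closure \<Omega>) a" and a_pos: "\<forall>x\<in>closure \<Omega>. a x > 0"
    and m_nonneg: "\<forall>x\<in>\<Omega>. \<forall>y\<in>\<Omega>. 0 \<le> m x y"
    and m_sym: "\<forall>x\<in>\<Omega>. \<forall>y\<in>\<Omega>. m x y = m y x"
    and m_meas: "\<forall>x\<in>\<Omega>. (\<lambda>y. m x y) \<in> borel_measurable (lebesgue_on \<Omega>)"
    and m_unif: "AE y in lebesgue. y \<in> \<Omega> \<longrightarrow> uniformly_continuous_on \<Omega> (\<lambda>x. m x y)"
    and m_bound: "\<exists>B::real. \<forall>x\<in>\<Omega>. (\<integral>\<^sup>+ y. ennreal (m x y * indicator \<Omega> y) \<partial>lebesgue) \<le> ennreal B"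
    and c0_pos: "0 < c0" and c0_C0: "c0 \<le> C0"
    and k_meas: "k \<in> borel_measurable lebesgue"
    and k_bounds: "\<forall>y. c0 * indicator \<Omega> y \<le> k y \<and> k y \<le> C0 * indicator \<Omega> y"
    and ubar_X: "in_L1_Linf \<Omega> ubar"
    and ubar_pos: "AE x in lebesgue. x \<in> \<Omega> \<longrightarrow> ubar x > 0"
    and ubar_eq: "AE x in lebesgue. x \<in> \<Omega> \<longrightarrow>
        nonlocal_op \<Omega> m ubar x + (a x - (LINT y:\<Omega>|lebesgue. k y * ubar y)) * ubar x = 0"
    and u0_X: "in_L1_Linf \<Omega> u0"
    and u0_nonneg: "AE x in lebesgue. x \<in> \<Omega> \<longrightarrow> u0 x \<ge> 0"
    and u0_nonzero: "\<not> (AE x in lebesgue. x \<in> \<Omega> \<longrightarrow> u0 x = 0)"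
    and u_X: "\<forall>t\<ge>0. in_L1_Linf \<Omega> (u t)"
    and u'_X: "\<forall>t>0. in_L1_Linf \<Omega> (u' t)"
    and u_deriv: "\<forall>t>0. ((\<lambda>h. X_norm \<Omega> (\<lambda>x. (u (t + h) x - u t x) / h - u' t x)) \<longlongrightarrow> 0) (at 0)"
    and u'_cont: "\<forall>t>0. ((\<lambda>s. X_norm \<Omega> (\<lambda>x. u' s x - u' t x)) \<longlongrightarrow> 0) (at t within {0<..})"
    and u_cont0: "((\<lambda>s. X_norm \<Omega> (\<lambda>x. u s x - u 0 x)) \<longlongrightarrow> 0) (at_right 0)"
    and u_init: "AE x in lebesgue. x \<in> \<Omega> \<longrightarrow> u 0 x = u0 x"
    and u_nonneg: "\<forall>t\<ge>0. AE x in lebesgue. x \<in> \<Omega> \<longrightarrow> u t x \<ge> 0"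
    and u_eq: "\<forall>t>0. AE x in lebesgue. x \<in> \<Omega> \<longrightarrow>
        u' t x = nonlocal_op \<Omega> m (u t) x + (a x - (LINT y:\<Omega>|lebesgue. k y * u t y)) * u t x"
  shows "\<exists>c2 C2. 0 < c2 \<and> c2 < C2 \<and> (\<forall>t>0. c2 \<le> L2_norm \<Omega> (u t) \<and> L2_norm \<Omega> (u t) < C2)"
proof -
  have "\<Omega> \<noteq> {}" using u0_nonzero by auto
  then interpret bounded_open_domain \<Omega> using \<Omega>_open \<Omega>_bounded by unfold_locales
  obtain G N H where kernel: "symmetric_kernel \<Omega> m G N H"
    using symmetric_kernel_exists[OF m_nonneg m_sym m_meas m_unif m_bound] .
  obtain a_min a_max where "0 < a_min" and a_bounds: "\<And>x. x \<in> closure \<Omega> \<Longrightarrow> a_min \<le> a x \<and> a x \<le> a_max"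
    using continuous_on_compact_pos_bounds[OF _ _ a_cont a_pos] \<Omega>_bounded \<open>\<Omega> \<noteq> {}\<close> by auto
  have "\<not> (AE x in lebesgue. x \<in> \<Omega> \<longrightarrow> u 0 x = 0)"
  proof
    assume "AE x in lebesgue. x \<in> \<Omega> \<longrightarrow> u 0 x = 0"
    with u_init have "AE x in lebesgue. x \<in> \<Omega> \<longrightarrow> u0 x = 0" by eventually_elim auto
    with u0_nonzero show False ..
  qed
  moreover have "\<And>x. x \<in> \<Omega> \<Longrightarrow> c0 \<le> k x \<and> k x \<le> C0" using k_bounds by (metis indicator_simps(1) mult_1_right)
  moreover have "\<And>x. x \<in> \<Omega> \<Longrightarrow> a_min \<le> a x \<and> a x \<le> a_max" using a_bounds closure_subset by blast
  ultimately interpret logistic_solution \<Omega> m G N H u u' a k ubar a_min a_max c0 C0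
    using kernel u_X u'_X u_deriv u_cont0 u_nonneg u_eq continuous_on_subset[OF a_cont closure_subset]
      \<open>0 < a_min\<close> k_meas c0_pos ubar_X ubar_pos ubar_eq
    by (intro logistic_solution.intro logistic_solution_axioms.intro) auto
  show ?thesis by (rule L2_norm_bounds)
qed

end
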